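(* Let $d\ge1$, let $B$ be the open unit ball of $\mathbb C^d$, and let $\mathcal H$ be a regular Hilbert space of holomorphic functions on $B$ with kernel $k$. Assume that for all distinct $\lambda_1,\lambda_2\in B$ and all $z_1,z_2\in\mathbb C$: there exists a holomorphic $\varphi:B\to\mathbb C$ with $\sup_B|\varphi|\le1$ and $\varphi(\lambda_i)=z_i$ ($i=1,2$) if and only if the $2\times2$ matrix $[(1-z_j\bar z_i)k_{\lambda_i}(\lambda_j)]_{i,j=1}^2$ is positive semidefinite. Then there is a nonvanishing holomorphic function $f$ on $B$ with $k_\lambda(\mu)=\overline{f(\lambda)}f(\mu)(1-\langle\mu,\lambda\rangle)^{-1}$ for all $\lambda,\mu\in B$. Consequently the coordinate multiplication tuple on $\mathcal H$ is unitarily equivalent to that on the space with kernel $(1-\langle\mu,\lambda\rangle)^{-1}$, and for all $m,n$, $\lambda_1,\dots,\lambda_n\in B$ and $z_1,\dots,z_n\in\mathcal M_m(\mathbb C)$, the block matrix $[(1-z_jz_i^* )k_{\lambda_i}(\lambda_j)]$ is positive semidefinite iff $\left[\frac{1-z_jz_i^*}{1-\langle\lambda_j,\lambda_i\rangle}\right]$ is positive semidefinite.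
   Context: $\langle\mu,\lambda\rangle=\sum_r\mu^r\bar\lambda^r$. Regular space: $\mathcal H$ a Hilbert space of holomorphic functions on $B$ with reproducing kernel $k_\lambda(\mu)$ ($\langle f,k_\lambda\rangle=f(\lambda)$), such that the coordinate multiplications $M^r$ are bounded, $M=(M^1,\dots,M^d)$ has Taylor spectrum in $\mathrm{cl}(B)$ and essential Taylor spectrum in $\partial B$, and $\dim\bigcap_r\ker(\lambda^r-M^r)^*=1$ for all $\lambda\in B$. Positive semidefiniteness of a block matrix $[A_{ij}]$ with $A_{ij}\in\mathcal M_m(\mathbb C)$ means $\sum_{i,j}\langle A_{ij}a_i,a_j\rangle\ge0$ for all $a_i\in\mathbb C^m$. *)

theory Defs
  imports "HOL-Analysis.Analysis"
begin

(* Functions on C^d; elements of the Hilbert space are functions on C^d that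
   vanish outside the open unit ball B = ball 0 1 (norm of (complex, 'd) vec is the
   Euclidean norm). *)
type_synonym 'd hfun = "(complex, 'd) vec \<Rightarrow> complex"

definition cinner :: "(complex, 'd::{finite,linorder}) vec \<Rightarrow> (complex, 'd) vec \<Rightarrow> complex" where
  "cinner mu lam = (\<Sum>r\<in>UNIV. mu$r * cnj (lam$r))"

definition holo_on :: "((complex, 'd::{finite,linorder}) vec) set \<Rightarrow> 'd hfun \<Rightarrow> bool" where
  "holo_on S f \<longleftrightarrow>
     (\<forall>z\<in>S. \<exists>L. (f has_derivative L) (at z) \<and> (\<forall>c v. L (c *s v) = c * L v))"

definition hnorm :: "(('d::{finite,linorder}) hfun \<Rightarrow> 'd hfun \<Rightarrow> complex) \<Rightarrow> 'd hfun \<Rightarrow> real" where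
  "hnorm ip f = sqrt (Re (ip f f))"

definition fun_hilbert_space :: "('d::{finite,linorder}) hfun set \<Rightarrow> ('d hfun \<Rightarrow> 'd hfun \<Rightarrow> complex) \<Rightarrow> bool" where
  "fun_hilbert_space H ip \<longleftrightarrow>
     (\<forall>f\<in>H. holo_on (ball 0 1) f \<and> (\<forall>z. z \<notin> ball 0 1 \<longrightarrow> f z = 0)) \<and>
     (\<lambda>z. 0) \<in> H \<and>
     (\<forall>f\<in>H. \<forall>g\<in>H. (\<lambda>z. f z + g z) \<in> H) \<and>
     (\<forall>c. \<forall>f\<in>H. (\<lambda>z. c * f z) \<in> H) \<and>
     (\<forall>f\<in>H. \<forall>g\<in>H. \<forall>h\<in>H. ip (\<lambda>z. f z + g z) h = ip f h + ip g h) \<and>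
     (\<forall>c. \<forall>f\<in>H. \<forall>g\<in>H. ip (\<lambda>z. c * f z) g = c * ip f g) \<and>
     (\<forall>f\<in>H. \<forall>g\<in>H. ip g f = cnj (ip f g)) \<and>
     (\<forall>f\<in>H. Im (ip f f) = 0 \<and> Re (ip f f) \<ge> 0) \<and>
     (\<forall>f\<in>H. ip f f = 0 \<longrightarrow> f = (\<lambda>z. 0)) \<and>
     (\<forall>s :: nat \<Rightarrow> _. (\<forall>n. s n \<in> H) \<longrightarrow>
        (\<forall>e>0. \<exists>N. \<forall>m\<ge>N. \<forall>n\<ge>N. hnorm ip (\<lambda>z. s m z - s n z) < e) \<longrightarrow>
        (\<exists>g\<in>H. \<forall>e>0. \<exists>N. \<forall>n\<ge>N. hnorm ip (\<lambda>z. s n z - g z) < e))"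

definition is_repr_kernel ::
  "('d::{finite,linorder}) hfun set \<Rightarrow> ('d hfun \<Rightarrow> 'd hfun \<Rightarrow> complex) \<Rightarrow> ((complex, 'd) vec \<Rightarrow> (complex, 'd) vec \<Rightarrow> complex) \<Rightarrow> bool" where
  "is_repr_kernel H ip k \<longleftrightarrow>
     (\<forall>lam\<in>ball 0 1.
        (\<lambda>mu. if mu \<in> ball 0 1 then k lam mu else 0) \<in> H \<and>
        (\<forall>f\<in>H. ip f (\<lambda>mu. if mu \<in> ball 0 1 then k lam mu else 0) = f lam))"

definition mult_op :: "('d::{finite,linorder}) \<Rightarrow> 'd hfun \<Rightarrow> 'd hfun" where
  "mult_op r f = (\<lambda>z. z$r * f z)"

definition bounded_op :: "('d::{finite,linorder}) hfun set \<Rightarrow> ('d hfun \<Rightarrow> 'd hfun \<Rightarrow> complex) \<Rightarrow> ('d hfun \<Rightarrow> 'd hfun) \<Rightarrow> bool" where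
  "bounded_op H ip A \<longleftrightarrow> (\<forall>f\<in>H. A f \<in> H) \<and> (\<exists>C. \<forall>f\<in>H. hnorm ip (A f) \<le> C * hnorm ip f)"

definition is_adjoint :: "('d::{finite,linorder}) hfun set \<Rightarrow> ('d hfun \<Rightarrow> 'd hfun \<Rightarrow> complex) \<Rightarrow> ('d hfun \<Rightarrow> 'd hfun) \<Rightarrow> ('d hfun \<Rightarrow> 'd hfun) \<Rightarrow> bool" where
  "is_adjoint H ip A A' \<longleftrightarrow> (\<forall>g\<in>H. A' g \<in> H) \<and> (\<forall>f\<in>H. \<forall>g\<in>H. ip (A f) g = ip f (A' g))"

(* Koszul (cochain) complex of a commuting tuple T = (T_r) on H: the degree-p part is
   H \<otimes> \<Lambda>^p(C^d), written as functions from subsets S of the index type (basis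
   e_S of \<Lambda>^p) to H, supported on sets of cardinality p; the differential is
   x \<mapsto> \<Sum>_j e_j \<and> T_j x. *)
definition koszul_chains :: "('d::{finite,linorder}) hfun set \<Rightarrow> nat \<Rightarrow> ('d set \<Rightarrow> 'd hfun) set" where
  "koszul_chains H p = {x. (\<forall>S. x S \<in> H) \<and> (\<forall>S. card S \<noteq> p \<longrightarrow> x S = (\<lambda>z. 0))}"

definition koszul_diff ::
  "(('d::{finite,linorder}) \<Rightarrow> 'd hfun \<Rightarrow> 'd hfun) \<Rightarrow> ('d set \<Rightarrow> 'd hfun) \<Rightarrow> ('d set \<Rightarrow> 'd hfun)" where
  "koszul_diff T x = (\<lambda>S z. \<Sum>j\<in>S. (-1) ^ card {i\<in>S. i < j} * T j (x (S - {j})) z)"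

definition koszul_cycles ::
  "(('d::{finite,linorder}) \<Rightarrow> 'd hfun \<Rightarrow> 'd hfun) \<Rightarrow> 'd hfun set \<Rightarrow> nat \<Rightarrow> ('d set \<Rightarrow> 'd hfun) set" where
  "koszul_cycles T H p = {x \<in> koszul_chains H p. koszul_diff T x = (\<lambda>S z. 0)}"

definition koszul_boundaries ::
  "(('d::{finite,linorder}) \<Rightarrow> 'd hfun \<Rightarrow> 'd hfun) \<Rightarrow> 'd hfun set \<Rightarrow> nat \<Rightarrow> ('d set \<Rightarrow> 'd hfun) set" where
  "koszul_boundaries T H p =
     (if p = 0 then {\<lambda>S z. 0} else koszul_diff T ` koszul_chains H (p - 1))"

definition koszul_exact :: "(('d::{finite,linorder}) \<Rightarrow> 'd hfun \<Rightarrow> 'd hfun) \<Rightarrow> 'd hfun set \<Rightarrow> bool" where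
  "koszul_exact T H \<longleftrightarrow> (\<forall>p. koszul_cycles T H p \<subseteq> koszul_boundaries T H p)"

(* all homology groups finite dimensional *)
definition koszul_fredholm :: "(('d::{finite,linorder}) \<Rightarrow> 'd hfun \<Rightarrow> 'd hfun) \<Rightarrow> 'd hfun set \<Rightarrow> bool" where
  "koszul_fredholm T H \<longleftrightarrow>
     (\<forall>p. \<exists>F. finite F \<and> F \<subseteq> koszul_cycles T H p \<and>
        (\<forall>x\<in>koszul_cycles T H p. \<exists>b\<in>koszul_boundaries T H p. \<exists>c.
            x = (\<lambda>S z. b S z + (\<Sum>f\<in>F. c f * f S z))))"

definition shifted_mult :: "(complex, 'd::{finite,linorder}) vec \<Rightarrow> 'd \<Rightarrow> 'd hfun \<Rightarrow> 'd hfun" where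
  "shifted_mult lam = (\<lambda>r f z. (z$r - lam$r) * f z)"

definition taylor_spectrum :: "('d::{finite,linorder}) hfun set \<Rightarrow> ((complex, 'd) vec) set" where
  "taylor_spectrum H = {lam. \<not> koszul_exact (shifted_mult lam) H}"

definition essential_taylor_spectrum :: "('d::{finite,linorder}) hfun set \<Rightarrow> ((complex, 'd) vec) set" where
  "essential_taylor_spectrum H = {lam. \<not> koszul_fredholm (shifted_mult lam) H}"

definition regular_space ::
  "('d::{finite,linorder}) hfun set \<Rightarrow> ('d hfun \<Rightarrow> 'd hfun \<Rightarrow> complex) \<Rightarrow> ((complex, 'd) vec \<Rightarrow> (complex, 'd) vec \<Rightarrow> complex) \<Rightarrow> bool" where
  "regular_space H ip k \<longleftrightarrow>
     fun_hilbert_space H ip \<and> is_repr_kernel H ip k \<and>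
     (\<forall>r. bounded_op H ip (mult_op r)) \<and>
     taylor_spectrum H \<subseteq> cball 0 1 \<and>
     essential_taylor_spectrum H \<subseteq> sphere 0 1 \<and>
     (\<forall>lam\<in>ball 0 1. \<forall>A'. (\<forall>r. is_adjoint H ip (\<lambda>f z. lam$r * f z - mult_op r f z) (A' r)) \<longrightarrow>
        (\<exists>g\<in>H. g \<noteq> (\<lambda>z. 0) \<and> (\<forall>r. A' r g = (\<lambda>z. 0)) \<and>
           (\<forall>h\<in>H. (\<forall>r. A' r h = (\<lambda>z. 0)) \<longrightarrow> (\<exists>c. h = (\<lambda>z. c * g z)))))"

(* positive semidefiniteness of an n x n block matrix [A_ij] with m x m blocks:
   \<Sum>_{i,j} <A_ij a_i, a_j> \<ge> 0 for all a_i \<in> C^m *)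
definition block_psd :: "nat \<Rightarrow> nat \<Rightarrow> (nat \<Rightarrow> nat \<Rightarrow> nat \<Rightarrow> nat \<Rightarrow> complex) \<Rightarrow> bool" where
  "block_psd n m A \<longleftrightarrow>
     (\<forall>a :: nat \<Rightarrow> nat \<Rightarrow> complex.
        let s = (\<Sum>i<n. \<Sum>j<n. \<Sum>p<m. \<Sum>q<m. A i j p q * a i q * cnj (a j p))
        in Im s = 0 \<and> Re s \<ge> 0)"

definition unitarily_equiv_mult ::
  "('d::{finite,linorder}) hfun set \<Rightarrow> ('d hfun \<Rightarrow> 'd hfun \<Rightarrow> complex) \<Rightarrow> 'd hfun set \<Rightarrow> ('d hfun \<Rightarrow> 'd hfun \<Rightarrow> complex) \<Rightarrow> bool" where
  "unitarily_equiv_mult H ip H' ip' \<longleftrightarrow>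
     (\<exists>U. bij_betw U H H' \<and>
        (\<forall>f\<in>H. \<forall>g\<in>H. ip' (U f) (U g) = ip f g) \<and>
        (\<forall>c. \<forall>f\<in>H. \<forall>g\<in>H. U (\<lambda>z. c * f z + g z) = (\<lambda>z. c * U f z + U g z)) \<and>
        (\<forall>r. \<forall>f\<in>H. U (mult_op r f) = mult_op r (U f)))"

end

theory Submission
  imports Defs "HOL-Complex_Analysis.Complex_Analysis"
begin

text \<open>
  Put \<open>z\<^sub>1 = 0\<close> in the two-point Pick property. Positivity of the \<open>2\<times>2\<close> matrix then says
  \<open>|k\<^sub>\<lambda>(\<mu>)|\<^sup>2 \<le> (1 - |z|\<^sup>2) k\<^sub>\<lambda>(\<lambda>) k\<^sub>\<mu>(\<mu>)\<close>, while by the Schwarz--Pick lemma on the complex line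
  through \<open>\<lambda>\<close> and \<open>\<mu>\<close> a Schur function with \<open>\<phi>(\<lambda>) = 0\<close>, \<open>\<phi>(\<mu>) = z\<close> exists iff \<open>|z| \<le> \<rho>(\<lambda>,\<mu>)\<close>,
  the pseudo-hyperbolic distance. Comparing the two conditions gives
  \<open>|k\<^sub>\<lambda>(\<mu>)|\<^sup>2 |1 - \<langle>\<mu>,\<lambda>\<rangle>|\<^sup>2 = k\<^sub>\<lambda>(\<lambda>) k\<^sub>\<mu>(\<mu>) (1 - |\<lambda>|\<^sup>2)(1 - |\<mu>|\<^sup>2)\<close>. With
  \<open>f = k\<^sub>0 / k\<^sub>0(0)\<^sup>1\<^sup>/\<^sup>2\<close> the holomorphic function \<open>\<mu> \<mapsto> k\<^sub>\<lambda>(\<mu>)(1 - \<langle>\<mu>,\<lambda>\<rangle>) / (f(\<lambda>)\<^sup>* f(\<mu>))\<close>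
  therefore has modulus one, so it is constant, and its value at \<open>\<lambda>\<close> is \<open>1\<close>.
  Division by \<open>f\<close> is then a unitary onto the space with kernel \<open>(1 - \<langle>\<mu>,\<lambda>\<rangle>)\<^sup>-\<^sup>1\<close> commuting with
  the coordinate multiplications, and conjugating with \<open>diag(f(\<lambda>\<^sub>i))\<close> compares the block matrices.
\<close>

lemma cinner_add_left: "cinner (x + y) z = cinner x z + cinner y z"
  by (simp add: cinner_def distrib_right sum.distrib)

lemma cinner_diff_left: "cinner (x - y) z = cinner x z - cinner y z"
  by (simp add: cinner_def left_diff_distrib sum_subtractf)

lemma cinner_scale_left: "cinner (c *s x) z = c * cinner x z"
  by (simp add: cinner_def sum_distrib_left mult.assoc)

lemma cinner_add_right: "cinner x (y + z) = cinner x y + cinner x z"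
  by (simp add: cinner_def distrib_left sum.distrib)

lemma cinner_diff_right: "cinner x (y - z) = cinner x y - cinner x z"
  by (simp add: cinner_def right_diff_distrib sum_subtractf)

lemma cinner_scale_right: "cinner x (c *s z) = cnj c * cinner x z"
  by (simp add: cinner_def sum_distrib_left mult.assoc mult.left_commute)

lemma cinner_commute: "cinner y x = cnj (cinner x y)"
  by (simp add: cinner_def mult.commute)

lemma cinner_zero_right [simp]: "cinner x 0 = 0"
  by (simp add: cinner_def)

lemma cinner_self: "cinner x x = of_real ((norm x)\<^sup>2)"
proof -
  have "(norm x)\<^sup>2 = (\<Sum>r\<in>UNIV. (cmod (x$r))\<^sup>2)"
    by (simp add: norm_vec_def L2_set_def sum_nonneg)
  then show ?thesis
    unfolding cinner_def of_real_sum by (simp add: complex_norm_square flip: of_real_power)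
qed

lemma norm_cinner_le: "cmod (cinner x y) \<le> norm x * norm y"
proof -
  have "cmod (cinner x y) \<le> (\<Sum>r\<in>UNIV. cmod (x$r) * cmod (y$r))"
    unfolding cinner_def using norm_sum[of "\<lambda>r. x$r * cnj (y$r)" UNIV] by (simp add: norm_mult)
  also have "\<dots> \<le> L2_set (\<lambda>r. cmod (x$r)) UNIV * L2_set (\<lambda>r. cmod (y$r)) UNIV"
    using L2_set_mult_ineq[of "\<lambda>r. cmod (x$r)" "\<lambda>r. cmod (y$r)" UNIV] by simp
  finally show ?thesis
    by (simp add: norm_vec_def)
qed

lemma norm_cinner_less_1:
  assumes "norm z < 1" "norm a < 1"
  shows "cmod (cinner z a) < 1"
proof -
  have "cmod (cinner z a) \<le> norm z * norm a"
    by (rule norm_cinner_le)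
  also have "\<dots> \<le> norm z"
    using assms by (simp add: mult_left_le)
  finally show ?thesis
    using assms by simp
qed

lemma one_minus_cinner_nonzero: "norm z < 1 \<Longrightarrow> norm a < 1 \<Longrightarrow> 1 - cinner z a \<noteq> 0"
  using norm_cinner_less_1 by fastforce

lemma norm_smult_vec: "norm (c *s v) = cmod c * norm (v :: (complex, 'd::finite) vec)"
  by (simp add: norm_vec_def norm_mult L2_set_right_distrib)

section \<open>Holomorphic functions on the ball\<close>

definition cdifferentiable :: "(complex, 'd::{finite,linorder}) vec \<Rightarrow> 'd hfun \<Rightarrow> bool" where
  "cdifferentiable z f \<longleftrightarrow> (\<exists>L. (f has_derivative L) (at z) \<and> (\<forall>c v. L (c *s v) = c * L v))"

lemma holo_on_iff_cdifferentiable: "holo_on S f \<longleftrightarrow> (\<forall>z\<in>S. cdifferentiable z f)"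
  by (simp add: holo_on_def cdifferentiable_def)

lemma cdifferentiable_const: "cdifferentiable z (\<lambda>x. c)"
  unfolding cdifferentiable_def by (rule exI[of _ "\<lambda>v. 0"]) auto

lemma cdifferentiable_cinner: "cdifferentiable z (\<lambda>x. cinner x b)"
proof -
  have "bounded_linear (\<lambda>x. cinner x b)"
    unfolding cinner_def
    by (intro bounded_linear_sum bounded_linear_mult_left[THEN bounded_linear_compose]
        bounded_linear_vec_nth)
  then show ?thesis
    unfolding cdifferentiable_def
    by (intro exI[of _ "\<lambda>v. cinner v b"])
      (simp add: bounded_linear.has_derivative[OF _ has_derivative_ident] cinner_scale_left)
qed

lemma cdifferentiable_add:
  "cdifferentiable z f \<Longrightarrow> cdifferentiable z g \<Longrightarrow> cdifferentiable z (\<lambda>x. f x + g x)"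
  unfolding cdifferentiable_def
  by (elim exE conjE, rule_tac x = "\<lambda>v. L v + La v" in exI)
    (auto intro: has_derivative_add simp: distrib_left[symmetric])

lemma cdifferentiable_diff:
  "cdifferentiable z f \<Longrightarrow> cdifferentiable z g \<Longrightarrow> cdifferentiable z (\<lambda>x. f x - g x)"
  unfolding cdifferentiable_def
  by (elim exE conjE, rule_tac x = "\<lambda>v. L v - La v" in exI)
    (auto intro: has_derivative_diff simp: right_diff_distrib[symmetric])

lemma cdifferentiable_mult:
  "cdifferentiable z f \<Longrightarrow> cdifferentiable z g \<Longrightarrow> cdifferentiable z (\<lambda>x. f x * g x)"
  unfolding cdifferentiable_def
proof (elim exE conjE)
  fix L M
  assume L: "(f has_derivative L) (at z)" and M: "(g has_derivative M) (at z)"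
    and "\<forall>c v. L (c *s v) = c * L v" "\<forall>c v. M (c *s v) = c * M v"
  moreover have "((\<lambda>x. f x * g x) has_derivative (\<lambda>v. f z * M v + L v * g z)) (at z)"
    using has_derivative_mult[OF L M] .
  ultimately show "\<exists>N. ((\<lambda>x. f x * g x) has_derivative N) (at z) \<and> (\<forall>c v. N (c *s v) = c * N v)"
    by (intro exI[of _ "\<lambda>v. f z * M v + L v * g z"]) (simp add: algebra_simps)
qed

lemma cdifferentiable_inverse:
  "cdifferentiable z f \<Longrightarrow> f z \<noteq> 0 \<Longrightarrow> cdifferentiable z (\<lambda>x. inverse (f x))"
  unfolding cdifferentiable_def
  by (elim exE conjE, rule_tac x = "\<lambda>h. - (inverse (f z) * L h * inverse (f z))" in exI)
    (auto intro: has_derivative_inverse)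

lemma cdifferentiable_divide:
  "cdifferentiable z f \<Longrightarrow> cdifferentiable z g \<Longrightarrow> g z \<noteq> 0 \<Longrightarrow> cdifferentiable z (\<lambda>x. f x / g x)"
  using cdifferentiable_mult[OF _ cdifferentiable_inverse, of z f g] by (simp add: divide_inverse)

lemma cdifferentiable_transform_within_open:
  "cdifferentiable z f \<Longrightarrow> open S \<Longrightarrow> z \<in> S \<Longrightarrow> (\<And>x. x \<in> S \<Longrightarrow> f x = g x) \<Longrightarrow> cdifferentiable z g"
  unfolding cdifferentiable_def using has_derivative_transform_within_open by blast

lemmas cdifferentiable_intros =
  cdifferentiable_const cdifferentiable_cinner cdifferentiable_add cdifferentiable_diff
  cdifferentiable_mult cdifferentiable_divide

lemma holomorphic_on_complex_line:
  fixes \<phi> :: "'d::{finite,linorder} hfun"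
  assumes hol: "holo_on (ball 0 1) \<phi>"
    and line: "\<And>\<zeta>. norm \<zeta> < 1 \<Longrightarrow> p + \<zeta> *s u \<in> ball 0 1"
  shows "(\<lambda>\<zeta>. \<phi> (p + \<zeta> *s u)) holomorphic_on ball 0 1"
  unfolding holomorphic_on_def
proof
  fix \<zeta> :: complex
  assume "\<zeta> \<in> ball 0 1"
  then obtain L where L: "(\<phi> has_derivative L) (at (p + \<zeta> *s u))"
    and lin: "\<forall>c v. L (c *s v) = c * L v"
    using hol line unfolding holo_on_def by fastforce
  have "r *\<^sub>R (x *s u) = (r *\<^sub>R x) *s u" for r x
    by (simp add: vec_eq_iff)
  then have "bounded_linear (\<lambda>h::complex. h *s u)"
    by (intro bounded_linear_intro[of _ "norm u"]) (simp_all add: vector_sadd_rdistrib norm_smult_vec)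
  then have "((\<lambda>\<zeta>. p + \<zeta> *s u) has_derivative (\<lambda>h. h *s u)) (at \<zeta>)"
    using has_derivative_add[OF has_derivative_const[of p]] bounded_linear.has_derivative[OF _ has_derivative_ident]
    by fastforce
  from has_derivative_compose[OF this L]
  moreover have "(\<lambda>h. L (h *s u)) = (*) (L u)"
    using lin by (auto simp: mult.commute)
  ultimately have "((\<lambda>\<zeta>. \<phi> (p + \<zeta> *s u)) has_field_derivative L u) (at \<zeta>)"
    by (simp add: has_field_derivative_def o_def)
  then show "(\<lambda>\<zeta>. \<phi> (p + \<zeta> *s u)) field_differentiable at \<zeta> within ball 0 1"
    using field_differentiable_at_within field_differentiable_def by blast
qed

lemma holo_on_constant_modulus_derivative:
  fixes h :: "'d::{finite,linorder} hfun"
  assumes hol: "holo_on (ball 0 1) h" and mod1: "\<forall>z\<in>ball 0 1. cmod (h z) = 1"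
    and z: "z \<in> ball 0 1"
  shows "(h has_derivative (\<lambda>v. 0)) (at z)"
proof -
  obtain L where L: "(h has_derivative L) (at z)" and lin: "\<forall>c v. L (c *s v) = c * L v"
    using hol z unfolding holo_on_def by blast
  have "((\<lambda>x. h x * cnj (h x)) has_derivative (\<lambda>v. h z * cnj (L v) + L v * cnj (h z))) (at z)"
    using has_derivative_mult[OF L has_derivative_cnj[OF L]] .
  moreover have "((\<lambda>x. h x * cnj (h x)) has_derivative (\<lambda>v. 0)) (at z)"
  proof (rule has_derivative_transform_within_open[where s = "ball 0 1" and f = "\<lambda>x. 1"])
    fix x :: "(complex, 'd) vec"
    assume "x \<in> ball 0 1"
    then show "1 = h x * cnj (h x)"
      using mod1 by (metis complex_norm_square mult.commute of_real_1 power_one)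
  qed (use z in auto)
  ultimately have real_part: "h z * cnj (L v) + L v * cnj (h z) = 0" for v
    using has_derivative_unique by metis
  have "L v = 0" for v
  proof -
    \<comment> \<open>\<open>Re (L v \<cdot> h(z)\<^sup>*) = 0\<close> for \<open>v\<close> and for \<open>i v\<close>, hence \<open>L v \<cdot> h(z)\<^sup>* = 0\<close>\<close>
    have "h z * cnj (\<i> * L v) + \<i> * L v * cnj (h z) = 0"
      using real_part[of "\<i> *s v"] lin by simp
    then have "L v * cnj (h z) = h z * cnj (L v)"
      by (simp add: algebra_simps)
    with real_part[of v] have "L v * cnj (h z) = 0"
      by simp
    moreover have "h z \<noteq> 0"
      using mod1 z by fastforce
    ultimately show ?thesis
      by simp
  qed
  then have "L = (\<lambda>v. 0)"
    by blast
  with L show ?thesis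
    by simp
qed

lemma holo_on_constant_modulus_imp_constant:
  fixes h :: "'d::{finite,linorder} hfun"
  assumes "holo_on (ball 0 1) h" and "\<forall>z\<in>ball 0 1. cmod (h z) = 1"
  obtains c where "\<And>z. z \<in> ball 0 1 \<Longrightarrow> h z = c"
  using has_derivative_zero_constant[OF convex_ball]
    holo_on_constant_modulus_derivative[OF assms] has_derivative_at_withinI by metis

section \<open>The pseudo-hyperbolic distance of the ball\<close>

text \<open>
  \<open>ball_automorphism_num a z\<close> is the numerator \<open>a - P\<^sub>a z - s\<^sub>a Q\<^sub>a z\<close> of Rudin's automorphism
  \<open>\<phi>\<^sub>a(z) = (a - P\<^sub>a z - s\<^sub>a Q\<^sub>a z) / (1 - \<langle>z,a\<rangle>)\<close> of the ball, where \<open>P\<^sub>a\<close> projects onto \<open>\<complex>a\<close>,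
  \<open>Q\<^sub>a = 1 - P\<^sub>a\<close> and \<open>s\<^sub>a = (1 - |a|\<^sup>2)\<^sup>1\<^sup>/\<^sup>2\<close>. For \<open>a = 0\<close> the division by \<open>|a|\<^sup>2 = 0\<close> yields \<open>0\<close>,
  which still gives the correct value \<open>-z\<close>.
\<close>

definition ball_automorphism_num :: "(complex, 'd::{finite,linorder}) vec \<Rightarrow> (complex, 'd) vec \<Rightarrow> (complex, 'd) vec" where
  "ball_automorphism_num a z =
     (1 - (1 - of_real (sqrt (1 - (norm a)\<^sup>2))) * (cinner z a / of_real ((norm a)\<^sup>2))) *s a
       - of_real (sqrt (1 - (norm a)\<^sup>2)) *s z"

definition pseudo_hyperbolic_dist :: "(complex, 'd::{finite,linorder}) vec \<Rightarrow> (complex, 'd) vec \<Rightarrow> real" where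
  "pseudo_hyperbolic_dist a w = norm (ball_automorphism_num a w) / cmod (1 - cinner w a)"

lemma cinner_ball_automorphism_num:
  assumes "norm a < 1"
  shows "cinner (ball_automorphism_num a z) (ball_automorphism_num a y) =
    of_real ((norm a)\<^sup>2) - cinner z a - cinner a y + cinner z a * cinner a y
      + (1 - of_real ((norm a)\<^sup>2)) * cinner z y"
proof -
  define A where "A = (norm a)\<^sup>2"
  define s where "s = sqrt (1 - A)"
  have "A < 1"
    using assms unfolding A_def by (simp add: abs_square_less_1)
  then have s2: "(complex_of_real s)\<^sup>2 = 1 - complex_of_real A"
    unfolding s_def by (simp flip: of_real_power)
  define p where "p = cinner z a / of_real A"
  define q where "q = cinner a y / of_real A"
  have P: "cinner z a = of_real A * p"
    unfolding p_def A_def by (cases "a = 0") auto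
  have Q: "cinner a y = of_real A * q"
    unfolding q_def A_def by (cases "a = 0") (auto simp: cinner_def)
  have aa: "cinner a a = of_real A"
    unfolding A_def by (rule cinner_self)
  have expand: "cinner (\<alpha> *s a - \<beta> *s z) (\<gamma> *s a - \<delta> *s y) =
      \<alpha> * cnj \<gamma> * cinner a a - \<alpha> * cnj \<delta> * cinner a y - \<beta> * cnj \<gamma> * cinner z a + \<beta> * cnj \<delta> * cinner z y"
    for \<alpha> \<beta> \<gamma> \<delta>
    by (simp add: cinner_diff_left cinner_diff_right cinner_scale_left cinner_scale_right
        right_diff_distrib left_diff_distrib mult.assoc)
  have "cinner (ball_automorphism_num a z) (ball_automorphism_num a y) =
      (1 - (1 - of_real s) * p) * (1 - (1 - of_real s) * q) * of_real A
      - (1 - (1 - of_real s) * p) * of_real s * cinner a y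
      - of_real s * (1 - (1 - of_real s) * q) * cinner z a + (of_real s)\<^sup>2 * cinner z y"
    unfolding ball_automorphism_num_def s_def[symmetric] A_def[symmetric] p_def[symmetric] expand
    by (simp add: cinner_commute[of a y, symmetric] aa q_def power2_eq_square)
  also have "\<dots> = of_real A - cinner z a - cinner a y + cinner z a * cinner a y
      + (1 - of_real A) * cinner z y"
    unfolding P Q using s2 by algebra
  finally show ?thesis
    unfolding A_def .
qed

lemma norm_ball_automorphism_num:
  assumes "norm a < 1"
  shows "(norm (ball_automorphism_num a z))\<^sup>2 =
    (cmod (1 - cinner z a))\<^sup>2 - (1 - (norm a)\<^sup>2) * (1 - (norm z)\<^sup>2)"
proof -
  have "complex_of_real ((norm (ball_automorphism_num a z))\<^sup>2) =
      of_real ((norm a)\<^sup>2) - cinner z a - cnj (cinner z a) + cinner z a * cnj (cinner z a)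
        + (1 - of_real ((norm a)\<^sup>2)) * of_real ((norm z)\<^sup>2)"
    using cinner_ball_automorphism_num[OF assms, of z z]
    by (simp add: cinner_commute[of a z] cinner_self)
  also have "\<dots> = complex_of_real ((cmod (1 - cinner z a))\<^sup>2 - (1 - (norm a)\<^sup>2) * (1 - (norm z)\<^sup>2))"
    by (simp only: of_real_diff of_real_mult complex_norm_square) (simp add: algebra_simps)
  finally show ?thesis
    using of_real_eq_iff by blast
qed

lemma norm_ball_automorphism_num_le:
  assumes a: "norm a < 1" and z: "norm z < 1"
  shows "norm (ball_automorphism_num a z) \<le> cmod (1 - cinner z a)"
proof -
  have "(norm a)\<^sup>2 \<le> 1" "(norm z)\<^sup>2 \<le> 1"
    using a z by (simp_all add: abs_square_le_1)
  then have "(norm (ball_automorphism_num a z))\<^sup>2 \<le> (cmod (1 - cinner z a))\<^sup>2"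
    unfolding norm_ball_automorphism_num[OF a] by simp
  then show ?thesis
    by (simp add: power_mono_iff)
qed

lemma ball_automorphism_num_self [simp]: "ball_automorphism_num a a = 0"
  by (cases "a = 0") (simp_all add: ball_automorphism_num_def cinner_self algebra_simps)

lemma ball_automorphism_num_eq_0D:
  assumes a: "norm a < 1" and "ball_automorphism_num a w = 0"
  shows "w = a"
proof -
  define A where "A = (norm a)\<^sup>2"
  define s where "s = sqrt (1 - A)"
  have "A < 1"
    using a unfolding A_def by (simp add: abs_square_less_1)
  then have s0: "s > 0"
    unfolding s_def by simp
  define \<alpha> where "\<alpha> = 1 - (1 - complex_of_real s) * (cinner w a / of_real A)"
  have "\<alpha> *s a = of_real s *s w"
    using assms(2) unfolding ball_automorphism_num_def \<alpha>_def s_def A_def by (simp add: algebra_simps)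
  then have w: "w = (\<alpha> / of_real s) *s a"
    using s0 by (metis (no_types, lifting) divide_inverse_commute inverse_eq_divide mult.commute
        of_real_eq_0_iff vector_smult_assoc vector_smult_lid less_irrefl right_inverse)
  show ?thesis
  proof (cases "a = 0")
    case False
    then have "cinner w a / of_real A = \<alpha> / of_real s"
      using w by (simp add: cinner_scale_left cinner_self A_def)
    with \<alpha>_def have "\<alpha> = 1 - (1 - complex_of_real s) * (\<alpha> / of_real s)"
      by simp
    then have "\<alpha> * of_real s = of_real s - (1 - complex_of_real s) * \<alpha>"
      using s0 by (simp add: field_simps)
    then have "\<alpha> = of_real s"
      by (simp add: algebra_simps)
    then show ?thesis
      using w s0 by simp
  qed (use w in simp)
qed

lemma pseudo_hyperbolic_dist_sq:
  assumes "norm a < 1" "norm w < 1"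
  shows "(pseudo_hyperbolic_dist a w)\<^sup>2 =
    1 - (1 - (norm a)\<^sup>2) * (1 - (norm w)\<^sup>2) / (cmod (1 - cinner w a))\<^sup>2"
  using one_minus_cinner_nonzero[OF assms(2,1)]
  unfolding pseudo_hyperbolic_dist_def power_divide norm_ball_automorphism_num[OF assms(1)]
  by (simp add: field_simps)

lemma pseudo_hyperbolic_dist_pos:
  assumes "norm a < 1" "norm w < 1" "a \<noteq> w"
  shows "pseudo_hyperbolic_dist a w > 0"
proof -
  have "ball_automorphism_num a w \<noteq> 0"
    using ball_automorphism_num_eq_0D[OF assms(1)] assms(3) by blast
  then show ?thesis
    using one_minus_cinner_nonzero[OF assms(2,1)] unfolding pseudo_hyperbolic_dist_def by simp
qed

lemma cdifferentiable_cinner_ball_automorphism_num: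
  "cdifferentiable z (\<lambda>x. cinner (ball_automorphism_num a x) v)"
proof -
  have "(\<lambda>x. cinner (ball_automorphism_num a x) v) =
      (\<lambda>x. (1 - (1 - of_real (sqrt (1 - (norm a)\<^sup>2))) * (cinner x a * (1 / of_real ((norm a)\<^sup>2))))
        * cinner a v - of_real (sqrt (1 - (norm a)\<^sup>2)) * cinner x v)"
    by (simp add: ball_automorphism_num_def cinner_diff_left cinner_scale_left left_diff_distrib)
  then show ?thesis
    by (simp only:) (intro cdifferentiable_intros)
qed

section \<open>Two-point interpolation by Schur functions\<close>

definition schur_function :: "'d::{finite,linorder} hfun \<Rightarrow> bool" where
  "schur_function \<phi> \<longleftrightarrow> holo_on (ball 0 1) \<phi> \<and> (\<forall>z\<in>ball 0 1. cmod (\<phi> z) \<le> 1)"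

lemma schur_function_cmult:
  assumes "schur_function \<phi>" "cmod c \<le> 1"
  shows "schur_function (\<lambda>z. c * \<phi> z)"
  using assms unfolding schur_function_def holo_on_iff_cdifferentiable
  by (auto intro!: cdifferentiable_intros mult_le_one simp: norm_mult)

text \<open>
  The witness is \<open>z \<mapsto> \<langle>\<phi>\<^sub>a(z), \<phi>\<^sub>a(w)\<rangle> / |\<phi>\<^sub>a(w)|\<close>, bounded by one by Cauchy--Schwarz since
  \<open>|\<phi>\<^sub>a| \<le> 1\<close> on the ball.
\<close>

lemma schur_function_attains_pseudo_hyperbolic_dist:
  assumes a: "norm a < 1" and w: "norm w < 1" and aw: "a \<noteq> w"
  obtains \<phi> where "schur_function \<phi>" "\<phi> a = 0" "\<phi> w = of_real (pseudo_hyperbolic_dist a w)"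
proof -
  define D where "D = cmod (1 - cinner w a)"
  have D0: "D > 0"
    unfolding D_def using one_minus_cinner_nonzero[OF w a] by simp
  define d where "d = pseudo_hyperbolic_dist a w"
  have d0: "d > 0"
    unfolding d_def by (rule pseudo_hyperbolic_dist_pos[OF a w aw])
  have Dw: "(1 - cinner w a) * (1 - cinner a w) = of_real (D\<^sup>2)"
    unfolding D_def complex_norm_square cinner_commute[of a w] by simp
  have Dw': "cmod (1 - cinner a w) = D"
    unfolding D_def cinner_commute[of a w] by (metis complex_cnj_diff complex_cnj_one complex_mod_cnj)
  define \<phi> where "\<phi> z =
      cinner (ball_automorphism_num a z) (ball_automorphism_num a w) / ((1 - cinner z a) * (1 - cinner a w) * of_real d)"
    for z
  have "cdifferentiable z \<phi>" if z: "z \<in> ball 0 1" for z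
  proof -
    have "(1 - cinner z a) * (1 - cinner a w) * of_real d \<noteq> 0"
      using one_minus_cinner_nonzero[of z a] one_minus_cinner_nonzero[OF a w] z a d0 by simp
    then show ?thesis
      unfolding \<phi>_def by (intro cdifferentiable_intros cdifferentiable_cinner_ball_automorphism_num) simp
  qed
  moreover have "cmod (\<phi> z) \<le> 1" if z: "z \<in> ball 0 1" for z
  proof -
    have nz: "norm z < 1"
      using z by simp
    have Dz: "cmod (1 - cinner z a) > 0"
      using one_minus_cinner_nonzero[OF nz a] by simp
    have num: "norm (ball_automorphism_num a z) \<le> cmod (1 - cinner z a)"
      by (rule norm_ball_automorphism_num_le[OF a nz])
    have "cmod (\<phi> z) \<le> norm (ball_automorphism_num a z) * norm (ball_automorphism_num a w)
        / (cmod (1 - cinner z a) * D * d)"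
      unfolding \<phi>_def using Dz D0 d0
      by (auto simp: norm_mult norm_divide Dw' intro!: divide_right_mono norm_cinner_le)
    also have "\<dots> = norm (ball_automorphism_num a z) / cmod (1 - cinner z a)"
      using Dz D0 d0 unfolding d_def pseudo_hyperbolic_dist_def D_def[symmetric] by (simp add: field_simps)
    also have "\<dots> \<le> 1"
      using num Dz by simp
    finally show ?thesis .
  qed
  moreover have "\<phi> w = of_real d"
  proof -
    have "\<phi> w = of_real ((norm (ball_automorphism_num a w))\<^sup>2 / (D\<^sup>2 * d))"
      unfolding \<phi>_def Dw by (simp add: cinner_self)
    also have "(norm (ball_automorphism_num a w))\<^sup>2 / (D\<^sup>2 * d) = d"
      using D0 d0 unfolding d_def pseudo_hyperbolic_dist_def D_def[symmetric]
      by (simp add: field_simps power2_eq_square)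
    finally show ?thesis .
  qed
  moreover have "\<phi> a = 0"
    unfolding \<phi>_def by (simp add: cinner_def)
  ultimately show ?thesis
    using that[of \<phi>] unfolding schur_function_def holo_on_iff_cdifferentiable d_def by simp
qed

lemma schwarz_lemma_weak:
  assumes hol: "g holomorphic_on ball 0 1" and g0: "g 0 = 0"
    and bnd: "\<And>z. norm z < 1 \<Longrightarrow> cmod (g z) \<le> 1" and \<rho>: "norm \<rho> < 1"
  shows "cmod (g \<rho>) \<le> cmod \<rho>"
proof (rule field_le_mult_one_interval)
  fix c :: real
  assume c: "0 < c" "c < 1"
  have "cmod (of_real c * g \<rho>) \<le> cmod \<rho>"
  proof (rule Schwarz_Lemma(1))
    fix z :: complex
    assume "norm z < 1"
    have "cmod (of_real c * g z) = c * cmod (g z)"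
      using c by (simp add: norm_mult)
    also have "\<dots> \<le> c"
      using mult_left_le[of "cmod (g z)" c] bnd[of z] \<open>norm z < 1\<close> c by simp
    finally show "cmod (of_real c * g z) < 1"
      using c by simp
  qed (use hol g0 \<rho> in \<open>auto intro: holomorphic_intros\<close>)
  then show "c * cmod (g \<rho>) \<le> cmod \<rho>"
    using c by (simp add: norm_mult)
qed

lemma schwarz_pick_disc_zero:
  assumes hol: "g holomorphic_on ball 0 1" and bnd: "\<And>z. norm z < 1 \<Longrightarrow> cmod (g z) \<le> 1"
    and x: "norm x < 1" and y: "norm y < 1" and gx: "g x = 0"
  shows "cmod (g y) \<le> cmod (Moebius_function 0 x y)"
proof -
  let ?M = "Moebius_function 0 (- x)"
  have M: "?M ` ball 0 1 \<subseteq> ball 0 1"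
    using Moebius_function_norm_lt_1[of "- x"] x by auto
  have "cmod ((g \<circ> ?M) (Moebius_function 0 x y)) \<le> cmod (Moebius_function 0 x y)"
  proof (rule schwarz_lemma_weak)
    show "g \<circ> ?M holomorphic_on ball 0 1"
      using holomorphic_on_compose_gen[OF Moebius_function_holomorphic hol M] x by simp
    show "(g \<circ> ?M) 0 = 0"
      using gx by (simp add: Moebius_function_def)
    show "cmod ((g \<circ> ?M) z) \<le> 1" if "norm z < 1" for z
    proof -
      have "?M z \<in> ball 0 1"
        using Moebius_function_norm_lt_1[of "- x" z] x that by simp
      then show ?thesis
        using bnd by simp
    qed
  qed (use Moebius_function_norm_lt_1 x y in auto)
  then show ?thesis
    using Moebius_function_compose[of "- x" x y] x y by simp
qed

lemma pseudo_hyperbolic_dist_along_line: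
  assumes a: "norm a < 1" and w: "norm w < 1" and u: "cinner u u = 1" and t: "t > 0"
    and wa: "w = a + of_real t *s u"
  shows "pseudo_hyperbolic_dist a w =
    t * sqrt (1 - (norm a)\<^sup>2 + (cmod (cinner a u))\<^sup>2) / cmod (1 - cinner w a)"
proof -
  define A where "A = (norm a)\<^sup>2"
  define \<beta> where "\<beta> = cinner a u"
  define D where "D = cmod (1 - cinner w a)"
  have D0: "D > 0"
    unfolding D_def using one_minus_cinner_nonzero[OF w a] by simp
  have ua: "cinner u a = cnj \<beta>"
    unfolding \<beta>_def by (simp add: cinner_commute[of u a])
  have aa: "cinner a a = of_real A"
    unfolding A_def by (rule cinner_self)
  have wa': "1 - cinner w a = 1 - of_real A - of_real t * cnj \<beta>"
    unfolding wa by (simp add: cinner_add_left cinner_scale_left aa ua)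
  have D2: "D\<^sup>2 = (1 - A - t * Re \<beta>)\<^sup>2 + (t * Im \<beta>)\<^sup>2"
    unfolding D_def wa' by (simp add: cmod_power2)
  have "complex_of_real ((norm w)\<^sup>2) = of_real A + of_real t * \<beta> + of_real t * cnj \<beta> + of_real (t\<^sup>2)"
    unfolding wa cinner_self[symmetric]
    by (simp add: cinner_add_left cinner_add_right cinner_scale_left cinner_scale_right aa ua u \<beta>_def
        algebra_simps power2_eq_square)
  also have "\<dots> = of_real (A + 2 * t * Re \<beta> + t\<^sup>2)"
    by (simp add: complex_eq_iff)
  finally have w2: "(norm w)\<^sup>2 = A + 2 * t * Re \<beta> + t\<^sup>2"
    using of_real_eq_iff by blast
  have key: "D\<^sup>2 - (1 - A) * (1 - (norm w)\<^sup>2) = t\<^sup>2 * (1 - A + (cmod \<beta>)\<^sup>2)"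
    unfolding D2 w2 cmod_power2 by (simp add: algebra_simps power2_eq_square)
  have rad: "1 - A + (cmod \<beta>)\<^sup>2 \<ge> 0"
    using a unfolding A_def by (simp add: abs_square_le_1)
  then have "(pseudo_hyperbolic_dist a w)\<^sup>2 = (t * sqrt (1 - A + (cmod \<beta>)\<^sup>2) / D)\<^sup>2"
    unfolding pseudo_hyperbolic_dist_sq[OF a w] A_def[symmetric] D_def[symmetric]
    using D0 key by (simp add: field_simps power_mult_distrib)
  moreover have "pseudo_hyperbolic_dist a w \<ge> 0" "t * sqrt (1 - A + (cmod \<beta>)\<^sup>2) / D \<ge> 0"
    using t D0 rad unfolding pseudo_hyperbolic_dist_def by simp_all
  ultimately show ?thesis
    unfolding A_def \<beta>_def D_def using power2_eq_iff_nonneg by blast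
qed

lemma norm_complex_line_sq:
  assumes u: "cinner u u = 1" and r: "r\<^sup>2 = 1 - (norm a)\<^sup>2 + (cmod (cinner a u))\<^sup>2"
  shows "(norm (a + (\<zeta> * of_real r - cinner a u) *s u))\<^sup>2 = 1 - r\<^sup>2 * (1 - (cmod \<zeta>)\<^sup>2)"
proof -
  define \<beta> where "\<beta> = cinner a u"
  define c where "c = \<zeta> * of_real r - \<beta>"
  have "complex_of_real ((norm (a + c *s u))\<^sup>2) = cinner a a + cnj c * \<beta> + c * cnj \<beta> + c * cnj c"
    unfolding cinner_self[symmetric]
    by (simp add: cinner_add_left cinner_add_right cinner_scale_left cinner_scale_right u \<beta>_def
        cinner_commute[of u a] distrib_left)
  also have "\<dots> = cinner a a + (c + \<beta>) * cnj (c + \<beta>) - \<beta> * cnj \<beta>"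
    by (simp add: algebra_simps)
  also have "\<dots> = of_real ((norm a)\<^sup>2 + r\<^sup>2 * (cmod \<zeta>)\<^sup>2 - (cmod \<beta>)\<^sup>2)"
    unfolding c_def cinner_self using complex_norm_square[of \<zeta>] complex_norm_square[of \<beta>]
    by (simp add: algebra_simps power2_eq_square)
  finally have "(norm (a + c *s u))\<^sup>2 = (norm a)\<^sup>2 + r\<^sup>2 * (cmod \<zeta>)\<^sup>2 - (cmod \<beta>)\<^sup>2"
    by (simp only: of_real_eq_iff)
  then show ?thesis
    unfolding c_def \<beta>_def by (simp add: r algebra_simps)
qed

text \<open>
  The disc is mapped into the ball by \<open>\<zeta> \<mapsto> p + \<zeta> v\<close>, where \<open>p\<close> is the point of the complex line
  through \<open>a\<close> and \<open>w\<close> closest to the origin and \<open>|v|\<^sup>2 = 1 - |p|\<^sup>2\<close>; in this parametrisation the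
  pseudo-hyperbolic distance of \<open>a\<close> and \<open>w\<close> is that of the disc.
\<close>

lemma complex_line_through_two_points:
  fixes a w :: "(complex, 'd::{finite,linorder}) vec"
  assumes a: "norm a < 1" and w: "norm w < 1" and aw: "a \<noteq> w"
  obtains p v \<xi> \<eta> where "\<And>\<zeta>. norm \<zeta> < 1 \<Longrightarrow> p + \<zeta> *s v \<in> ball 0 1"
    and "norm \<xi> < 1" "norm \<eta> < 1" "p + \<xi> *s v = a" "p + \<eta> *s v = w"
    and "cmod (Moebius_function 0 \<xi> \<eta>) = pseudo_hyperbolic_dist a w"
proof -
  define t where "t = norm (w - a)"
  have t0: "t > 0"
    using aw unfolding t_def by simp
  define u where "u = complex_of_real (1 / t) *s (w - a)"
  have uu: "cinner u u = 1"
    using t0 unfolding u_def cinner_self norm_smult_vec t_def[symmetric] by (simp add: norm_divide)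
  have wa: "w = a + complex_of_real t *s u"
    unfolding u_def using t0 by simp
  define \<beta> where "\<beta> = cinner a u"
  define r where "r = sqrt (1 - (norm a)\<^sup>2 + (cmod \<beta>)\<^sup>2)"
  have "(norm a)\<^sup>2 < 1"
    using a by (simp add: abs_square_less_1)
  then have r2: "r\<^sup>2 = 1 - (norm a)\<^sup>2 + (cmod \<beta>)\<^sup>2" and r0: "r > 0"
    unfolding r_def by (simp_all add: add_pos_nonneg)
  define p where "p = a - \<beta> *s u"
  define v where "v = complex_of_real r *s u"
  have line: "p + \<zeta> *s v = a + (\<zeta> * of_real r - \<beta>) *s u" for \<zeta>
    unfolding p_def v_def by (simp add: vector_smult_assoc vector_sub_rdistrib)
  have in_ball_iff: "p + \<zeta> *s v \<in> ball 0 1 \<longleftrightarrow> norm \<zeta> < 1" for \<zeta>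
  proof -
    have "p + \<zeta> *s v \<in> ball 0 1 \<longleftrightarrow> (norm (p + \<zeta> *s v))\<^sup>2 < 1"
      by (simp add: abs_square_less_1)
    also have "\<dots> \<longleftrightarrow> (cmod \<zeta>)\<^sup>2 < 1"
      unfolding line \<beta>_def norm_complex_line_sq[OF uu r2[unfolded \<beta>_def]] using r0 by (simp add: zero_less_mult_iff)
    finally show ?thesis
      by (simp add: abs_square_less_1)
  qed
  define \<xi> where "\<xi> = \<beta> / of_real r"
  define \<eta> where "\<eta> = (\<beta> + of_real t) / of_real r"
  have a_on_line: "p + \<xi> *s v = a" and w_on_line: "p + \<eta> *s v = w"
    unfolding line \<xi>_def \<eta>_def wa using r0 by simp_all
  have "cmod (Moebius_function 0 \<xi> \<eta>) = pseudo_hyperbolic_dist a w"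
  proof -
    have "1 - cinner w a = 1 - of_real ((norm a)\<^sup>2) - of_real t * cnj \<beta>"
      unfolding wa \<beta>_def by (simp add: cinner_add_left cinner_scale_left cinner_self cinner_commute[of u a])
    also have "\<dots> = of_real (r\<^sup>2) - cnj \<beta> * (\<beta> + of_real t)"
      using complex_norm_square[of \<beta>] unfolding r2 by (simp add: algebra_simps)
    finally have "1 - cnj \<xi> * \<eta> = (1 - cinner w a) / of_real (r\<^sup>2)"
      unfolding \<xi>_def \<eta>_def using r0 by (simp add: field_simps power2_eq_square)
    moreover have "\<eta> - \<xi> = of_real (t / r)"
      unfolding \<eta>_def \<xi>_def by (simp add: diff_divide_distrib[symmetric])
    ultimately have "cmod (Moebius_function 0 \<xi> \<eta>) = t * r / cmod (1 - cinner w a)"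
      using r0 t0 by (simp add: Moebius_function_simple norm_divide norm_mult power2_eq_square)
    then show ?thesis
      using pseudo_hyperbolic_dist_along_line[OF a w uu t0 wa] unfolding r_def \<beta>_def by simp
  qed
  moreover have "norm \<xi> < 1" "norm \<eta> < 1"
    using in_ball_iff[of \<xi>] in_ball_iff[of \<eta>] a w a_on_line w_on_line by simp_all
  ultimately show ?thesis
    using that in_ball_iff a_on_line w_on_line by blast
qed

lemma schur_function_bound:
  assumes \<phi>: "schur_function \<phi>" and a: "norm a < 1" and w: "norm w < 1" and aw: "a \<noteq> w"
    and \<phi>a: "\<phi> a = 0"
  shows "cmod (\<phi> w) \<le> pseudo_hyperbolic_dist a w"
proof -
  obtain p v \<xi> \<eta> where line: "\<And>\<zeta>. norm \<zeta> < 1 \<Longrightarrow> p + \<zeta> *s v \<in> ball 0 1"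
    and \<xi>: "norm \<xi> < 1" "p + \<xi> *s v = a" and \<eta>: "norm \<eta> < 1" "p + \<eta> *s v = w"
    and dist: "cmod (Moebius_function 0 \<xi> \<eta>) = pseudo_hyperbolic_dist a w"
    using complex_line_through_two_points[OF a w aw] by metis
  have "cmod (\<phi> (p + \<eta> *s v)) \<le> cmod (Moebius_function 0 \<xi> \<eta>)"
  proof (rule schwarz_pick_disc_zero[where g = "\<lambda>\<zeta>. \<phi> (p + \<zeta> *s v)"])
    show "(\<lambda>\<zeta>. \<phi> (p + \<zeta> *s v)) holomorphic_on ball 0 1"
      using \<phi> line unfolding schur_function_def by (intro holomorphic_on_complex_line) auto
    show "cmod (\<phi> (p + \<zeta> *s v)) \<le> 1" if "norm \<zeta> < 1" for \<zeta>
      using \<phi> line[OF that] unfolding schur_function_def by blast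
  qed (use \<xi> \<eta> \<phi>a in auto)
  then show ?thesis
    using \<eta> dist by simp
qed

lemma schur_interpolation_from_zero_iff:
  assumes a: "norm a < 1" and w: "norm w < 1" and aw: "a \<noteq> w"
  shows "(\<exists>\<phi>. schur_function \<phi> \<and> \<phi> a = 0 \<and> \<phi> w = z) \<longleftrightarrow> cmod z \<le> pseudo_hyperbolic_dist a w"
proof
  assume "\<exists>\<phi>. schur_function \<phi> \<and> \<phi> a = 0 \<and> \<phi> w = z"
  then show "cmod z \<le> pseudo_hyperbolic_dist a w"
    using schur_function_bound[OF _ a w aw] by blast
next
  assume z: "cmod z \<le> pseudo_hyperbolic_dist a w"
  define d where "d = pseudo_hyperbolic_dist a w"
  have d0: "d > 0"
    unfolding d_def by (rule pseudo_hyperbolic_dist_pos[OF a w aw])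
  obtain \<phi> where \<phi>: "schur_function \<phi>" "\<phi> a = 0" "\<phi> w = of_real d"
    using schur_function_attains_pseudo_hyperbolic_dist[OF a w aw] unfolding d_def by metis
  have "schur_function (\<lambda>x. z / of_real d * \<phi> x)"
    using z d0 unfolding d_def[symmetric] by (intro schur_function_cmult \<phi>(1)) (simp add: norm_divide)
  then show "\<exists>\<phi>. schur_function \<phi> \<and> \<phi> a = 0 \<and> \<phi> w = z"
    using \<phi>(2,3) d0 by (intro exI[of _ "\<lambda>x. z / of_real d * \<phi> x"]) simp
qed

definition nonneg_complex :: "complex \<Rightarrow> bool" where
  "nonneg_complex s \<longleftrightarrow> Im s = 0 \<and> 0 \<le> Re s"

lemma nonneg_complex_of_real [simp]: "nonneg_complex (of_real r) \<longleftrightarrow> 0 \<le> r"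
  by (simp add: nonneg_complex_def)

lemma block_psd_2_1_iff:
  "block_psd 2 1 A \<longleftrightarrow> (\<forall>x y. nonneg_complex
     (A 0 0 0 0 * x * cnj x + A 0 1 0 0 * x * cnj y + A 1 0 0 0 * y * cnj x + A 1 1 0 0 * y * cnj y))"
proof -
  have sum2: "(\<Sum>i<2. g i) = g 0 + g (1::nat)" for g :: "nat \<Rightarrow> complex"
    by (simp add: numeral_2_eq_2)
  have form: "(\<Sum>i<2. \<Sum>j<2. \<Sum>p<1. \<Sum>q<1. A i j p q * a i q * cnj (a j p)) =
      A 0 0 0 0 * a 0 0 * cnj (a 0 0) + A 0 1 0 0 * a 0 0 * cnj (a 1 0)
        + A 1 0 0 0 * a 1 0 * cnj (a 0 0) + A 1 1 0 0 * a 1 0 * cnj (a 1 0)" for a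
    by (simp add: sum2)
  show ?thesis
    unfolding block_psd_def Let_def form nonneg_complex_def[symmetric]
  proof (intro iffI allI)
    fix x y
    assume "\<forall>a :: nat \<Rightarrow> nat \<Rightarrow> complex. nonneg_complex (A 0 0 0 0 * a 0 0 * cnj (a 0 0) + A 0 1 0 0 * a 0 0 * cnj (a 1 0)
        + A 1 0 0 0 * a 1 0 * cnj (a 0 0) + A 1 1 0 0 * a 1 0 * cnj (a 1 0))"
    note H = this
    define a :: "nat \<Rightarrow> nat \<Rightarrow> complex" where "a i q = (if i = 0 then x else y)" for i q
    have "a 0 0 = x" "a 1 0 = y"
      unfolding a_def by simp_all
    with H[rule_format, of a] show "nonneg_complex (A 0 0 0 0 * x * cnj x + A 0 1 0 0 * x * cnj y
        + A 1 0 0 0 * y * cnj x + A 1 1 0 0 * y * cnj y)"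
      by (simp only:)
  qed blast
qed

lemma hermitian_2x2_psd_iff:
  assumes "a > 0"
  shows "(\<forall>x y. nonneg_complex
      (of_real a * x * cnj x + c * x * cnj y + cnj c * y * cnj x + of_real b * y * cnj y))
    \<longleftrightarrow> (cmod c)\<^sup>2 \<le> a * b"
proof
  assume "\<forall>x y. nonneg_complex
      (of_real a * x * cnj x + c * x * cnj y + cnj c * y * cnj x + of_real b * y * cnj y)"
  moreover have "of_real a * (- cnj c) * cnj (- cnj c) + c * (- cnj c) * cnj (of_real a)
      + cnj c * of_real a * cnj (- cnj c) + of_real b * of_real a * cnj (of_real a) =
      of_real (a * (a * b - (cmod c)\<^sup>2))"
    using complex_norm_square[of c] by (simp add: algebra_simps power2_eq_square)
  ultimately have "0 \<le> a * (a * b - (cmod c)\<^sup>2)"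
    by (metis nonneg_complex_of_real)
  then show "(cmod c)\<^sup>2 \<le> a * b"
    using assms by (simp add: zero_le_mult_iff)
next
  assume det: "(cmod c)\<^sup>2 \<le> a * b"
  show "\<forall>x y. nonneg_complex
      (of_real a * x * cnj x + c * x * cnj y + cnj c * y * cnj x + of_real b * y * cnj y)"
  proof (intro allI)
    fix x y :: complex
    \<comment> \<open>completing the square\<close>
    have "of_real a * x * cnj x + c * x * cnj y + cnj c * y * cnj x + of_real b * y * cnj y =
        of_real (((cmod (of_real a * x + cnj c * y))\<^sup>2 + (a * b - (cmod c)\<^sup>2) * (cmod y)\<^sup>2) / a)"
      using assms complex_norm_square[of c] complex_norm_square[of y]
        complex_norm_square[of "of_real a * x + cnj c * y"]
      by (simp add: field_simps power2_eq_square)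
    moreover have "0 \<le> ((cmod (of_real a * x + cnj c * y))\<^sup>2 + (a * b - (cmod c)\<^sup>2) * (cmod y)\<^sup>2) / a"
      using assms det by simp
    ultimately show "nonneg_complex
        (of_real a * x * cnj x + c * x * cnj y + cnj c * y * cnj x + of_real b * y * cnj y)"
      by (metis nonneg_complex_of_real)
  qed
qed

lemma fun_hilbert_space_inner_commute:
  "fun_hilbert_space H ip \<Longrightarrow> f \<in> H \<Longrightarrow> g \<in> H \<Longrightarrow> ip g f = cnj (ip f g)"
  unfolding fun_hilbert_space_def by blast

lemma fun_hilbert_space_inner_self:
  "fun_hilbert_space H ip \<Longrightarrow> f \<in> H \<Longrightarrow> Im (ip f f) = 0 \<and> 0 \<le> Re (ip f f)"
  unfolding fun_hilbert_space_def by blast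

lemma fun_hilbert_space_inner_self_eq_0:
  "fun_hilbert_space H ip \<Longrightarrow> f \<in> H \<Longrightarrow> ip f f = 0 \<Longrightarrow> f = (\<lambda>z. 0)"
  unfolding fun_hilbert_space_def by blast

lemma fun_hilbert_space_vanish:
  "fun_hilbert_space H ip \<Longrightarrow> h \<in> H \<Longrightarrow> \<forall>z. z \<notin> ball 0 1 \<longrightarrow> h z = 0"
  unfolding fun_hilbert_space_def by blast

lemma fun_hilbert_space_scale:
  "fun_hilbert_space H ip \<Longrightarrow> h \<in> H \<Longrightarrow> (\<lambda>z. c * h z) \<in> H"
  unfolding fun_hilbert_space_def by blast

lemma fun_hilbert_space_inner_scale_right:
  assumes "fun_hilbert_space H ip" "g \<in> H" "h \<in> H"
  shows "ip g (\<lambda>z. c * h z) = cnj c * ip g h"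
proof -
  have "ip (\<lambda>z. c * h z) g = c * ip h g"
    using assms unfolding fun_hilbert_space_def by blast
  then show ?thesis
    using fun_hilbert_space_inner_commute[OF assms(1)] fun_hilbert_space_scale[OF assms(1,3)] assms(2,3)
    by (metis complex_cnj_cnj complex_cnj_mult)
qed

definition kernel_fun :: "((complex, 'd::{finite,linorder}) vec \<Rightarrow> (complex, 'd) vec \<Rightarrow> complex)
    \<Rightarrow> (complex, 'd) vec \<Rightarrow> 'd hfun" where
  "kernel_fun k l = (\<lambda>\<mu>. if \<mu> \<in> ball 0 1 then k l \<mu> else 0)"

lemma kernel_fun_in: "is_repr_kernel H ip k \<Longrightarrow> l \<in> ball 0 1 \<Longrightarrow> kernel_fun k l \<in> H"
  unfolding is_repr_kernel_def kernel_fun_def by blast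

lemma kernel_fun_reproduces:
  "is_repr_kernel H ip k \<Longrightarrow> l \<in> ball 0 1 \<Longrightarrow> f \<in> H \<Longrightarrow> ip f (kernel_fun k l) = f l"
  unfolding is_repr_kernel_def kernel_fun_def by blast

lemma kernel_eq_inner:
  "is_repr_kernel H ip k \<Longrightarrow> l \<in> ball 0 1 \<Longrightarrow> m \<in> ball 0 1 \<Longrightarrow>
    k l m = ip (kernel_fun k l) (kernel_fun k m)"
  using kernel_fun_reproduces[of H ip k m "kernel_fun k l"] kernel_fun_in[of H ip k l]
  by (simp add: kernel_fun_def)

lemma kernel_cnj_swap:
  assumes "fun_hilbert_space H ip" "is_repr_kernel H ip k" "l \<in> ball 0 1" "m \<in> ball 0 1"
  shows "k l m = cnj (k m l)"
  using fun_hilbert_space_inner_commute[OF assms(1) kernel_fun_in[OF assms(2,3)] kernel_fun_in[OF assms(2,4)]]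
    kernel_eq_inner[OF assms(2,3,4)] kernel_eq_inner[OF assms(2,4,3)]
  by simp

lemma kernel_diag_real_nonneg:
  assumes "fun_hilbert_space H ip" "is_repr_kernel H ip k" "l \<in> ball 0 1"
  shows "k l l = of_real (Re (k l l))" "Re (k l l) \<ge> 0"
  using fun_hilbert_space_inner_self[OF assms(1) kernel_fun_in[OF assms(2,3)]]
  by (simp_all add: kernel_eq_inner[OF assms(2,3,3)] complex_eq_iff)

lemma kernel_diag_zero_imp_zero:
  assumes "fun_hilbert_space H ip" "is_repr_kernel H ip k" "l \<in> ball 0 1" "k l l = 0"
    and "m \<in> ball 0 1"
  shows "k l m = 0"
proof -
  have "kernel_fun k l = (\<lambda>z. 0)"
    using fun_hilbert_space_inner_self_eq_0[OF assms(1) kernel_fun_in[OF assms(2,3)]] assms(4)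
    by (simp add: kernel_eq_inner[OF assms(2,3,3)])
  then show ?thesis
    using assms(5) unfolding kernel_fun_def by metis
qed

section \<open>Kernels with the two-point Pick property\<close>

definition two_point_pick_property ::
    "((complex, 'd::{finite,linorder}) vec \<Rightarrow> (complex, 'd) vec \<Rightarrow> complex) \<Rightarrow> bool" where
  "two_point_pick_property k \<longleftrightarrow>
     (\<forall>l1\<in>ball 0 1. \<forall>l2\<in>ball 0 1. l1 \<noteq> l2 \<longrightarrow> (\<forall>z1 z2.
       (\<exists>\<phi>. schur_function \<phi> \<and> \<phi> l1 = z1 \<and> \<phi> l2 = z2) \<longleftrightarrow>
       block_psd 2 1 (\<lambda>i j p q. (1 - (if j = 0 then z1 else z2) * cnj (if i = 0 then z1 else z2)) *
          k (if i = 0 then l1 else l2) (if j = 0 then l1 else l2))))"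

lemma two_point_pick_propertyD:
  assumes "two_point_pick_property k" "l1 \<in> ball 0 1" "l2 \<in> ball 0 1" "l1 \<noteq> l2"
  shows "(\<exists>\<phi>. schur_function \<phi> \<and> \<phi> l1 = z1 \<and> \<phi> l2 = z2) \<longleftrightarrow>
    (\<forall>x y. nonneg_complex ((1 - z1 * cnj z1) * k l1 l1 * x * cnj x + (1 - z2 * cnj z1) * k l1 l2 * x * cnj y
      + (1 - z1 * cnj z2) * k l2 l1 * y * cnj x + (1 - z2 * cnj z2) * k l2 l2 * y * cnj y))"
  using assms unfolding two_point_pick_property_def block_psd_2_1_iff by simp

lemma ball_exists_other_point:
  fixes l :: "(complex, 'd::{finite,linorder}) vec"
  assumes "norm l < 1"
  obtains l' where "norm l' < 1" "l' \<noteq> l"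
proof (cases "l = 0")
  case True
  obtain i :: 'd where True
    by simp
  have "axis i (1 :: complex) \<in> Basis"
    by (auto simp: Basis_vec_def)
  then have "norm ((1 / 2 :: complex) *s axis i 1) < 1"
    by (simp add: norm_smult_vec norm_Basis)
  moreover have "(1 / 2 :: complex) *s axis i 1 \<noteq> 0"
    by (simp add: axis_def vec_eq_iff)
  ultimately show ?thesis
    using True that by blast
next
  case False
  then have "(1 / 2 :: complex) *s l \<noteq> l"
    by (auto simp: vec_eq_iff)
  moreover have "norm ((1 / 2 :: complex) *s l) < 1"
    using assms by (simp add: norm_smult_vec)
  ultimately show ?thesis
    using that by blast
qed

text \<open>A kernel vanishing on the diagonal would make every \<open>\<phi>(\<lambda>) = 2\<close> interpolable.\<close>

lemma pick_kernel_diag_pos: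
  assumes hs: "fun_hilbert_space H ip" and rk: "is_repr_kernel H ip k"
    and pick: "two_point_pick_property k" and l: "l \<in> ball 0 1"
  shows "Re (k l l) > 0"
proof (rule ccontr)
  assume "\<not> Re (k l l) > 0"
  then have kl: "k l l = 0"
    using kernel_diag_real_nonneg[OF hs rk l] by (metis less_eq_real_def of_real_0)
  obtain l' where l': "norm l' < 1" "l' \<noteq> l"
    using ball_exists_other_point[of l] l by auto
  then have l'b: "l' \<in> ball 0 1"
    by simp
  have kll': "k l l' = 0" and kl'l: "k l' l = 0"
    using kernel_diag_zero_imp_zero[OF hs rk l kl l'b] kernel_cnj_swap[OF hs rk l'b l] by simp_all
  have "\<forall>x y. nonneg_complex ((1 - 2 * cnj 2) * k l l * x * cnj x + (1 - 0 * cnj 2) * k l l' * x * cnj y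
      + (1 - 2 * cnj 0) * k l' l * y * cnj x + (1 - 0 * cnj 0) * k l' l' * y * cnj y)"
  proof (intro allI)
    fix x y :: complex
    have "(1 - 2 * cnj 2) * k l l * x * cnj x + (1 - 0 * cnj 2) * k l l' * x * cnj y
        + (1 - 2 * cnj 0) * k l' l * y * cnj x + (1 - 0 * cnj 0) * k l' l' * y * cnj y
        = of_real (Re (k l' l') * (cmod y)\<^sup>2)"
      using kernel_diag_real_nonneg(1)[OF hs rk l'b] complex_norm_square[of y] kl kll' kl'l
      by (simp add: mult.assoc)
    moreover have "0 \<le> Re (k l' l') * (cmod y)\<^sup>2"
      using kernel_diag_real_nonneg(2)[OF hs rk l'b] by simp
    ultimately show "nonneg_complex ((1 - 2 * cnj 2) * k l l * x * cnj x + (1 - 0 * cnj 2) * k l l' * x * cnj y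
        + (1 - 2 * cnj 0) * k l' l * y * cnj x + (1 - 0 * cnj 0) * k l' l' * y * cnj y)"
      by (metis nonneg_complex_of_real)
  qed
  then obtain \<phi> where "schur_function \<phi>" "\<phi> l = 2"
    using two_point_pick_propertyD[OF pick l l'b l'(2)[symmetric], of 2 0] by blast
  then show False
    using l unfolding schur_function_def by force
qed

lemma pick_kernel_modulus:
  assumes hs: "fun_hilbert_space H ip" and rk: "is_repr_kernel H ip k"
    and pick: "two_point_pick_property k"
    and l1: "l1 \<in> ball 0 1" and l2: "l2 \<in> ball 0 1" and ne: "l1 \<noteq> l2"
  shows "(cmod (k l1 l2))\<^sup>2 = Re (k l1 l1) * Re (k l2 l2) * (1 - (pseudo_hyperbolic_dist l1 l2)\<^sup>2)"
proof -
  define a1 where "a1 = Re (k l1 l1)"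
  define a2 where "a2 = Re (k l2 l2)"
  define c where "c = k l1 l2"
  define d where "d = pseudo_hyperbolic_dist l1 l2"
  have a1: "a1 > 0" and a2: "a2 > 0"
    unfolding a1_def a2_def using pick_kernel_diag_pos[OF hs rk pick] l1 l2 by auto
  have k11: "k l1 l1 = of_real a1" and k22: "k l2 l2 = of_real a2" and k21: "k l2 l1 = cnj c"
    unfolding a1_def a2_def c_def
    using kernel_diag_real_nonneg(1)[OF hs rk] kernel_cnj_swap[OF hs rk l2 l1] l1 l2 by auto
  have crit: "cmod z \<le> d \<longleftrightarrow> (cmod c)\<^sup>2 \<le> a1 * ((1 - (cmod z)\<^sup>2) * a2)" for z
  proof -
    have form: "(1 - 0 * cnj 0) * k l1 l1 * x * cnj x + (1 - z * cnj 0) * k l1 l2 * x * cnj y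
        + (1 - 0 * cnj z) * k l2 l1 * y * cnj x + (1 - z * cnj z) * k l2 l2 * y * cnj y =
        of_real a1 * x * cnj x + c * x * cnj y + cnj c * y * cnj x
          + of_real ((1 - (cmod z)\<^sup>2) * a2) * y * cnj y" for x y
      using complex_norm_square[of z] unfolding k11 k22 k21 c_def[symmetric] by simp
    have "cmod z \<le> d \<longleftrightarrow> (\<exists>\<phi>. schur_function \<phi> \<and> \<phi> l1 = 0 \<and> \<phi> l2 = z)"
      unfolding d_def using schur_interpolation_from_zero_iff[of l1 l2 z] l1 l2 ne by simp
    also have "\<dots> \<longleftrightarrow> (cmod c)\<^sup>2 \<le> a1 * ((1 - (cmod z)\<^sup>2) * a2)"
      unfolding two_point_pick_propertyD[OF pick l1 l2 ne] form by (rule hermitian_2x2_psd_iff[OF a1])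
    finally show ?thesis .
  qed
  have d0: "d \<ge> 0"
    unfolding d_def pseudo_hyperbolic_dist_def by simp
  then have upper: "(cmod c)\<^sup>2 \<le> (1 - d\<^sup>2) * a1 * a2"
    using crit[of "of_real d"] by (simp add: mult_ac)
  have "(cmod c)\<^sup>2 \<le> a1 * a2"
    using crit[of 0] d0 by simp
  then have rad: "(cmod c)\<^sup>2 / (a1 * a2) \<le> 1"
    using a1 a2 by simp
  \<comment> \<open>the value \<open>\<tau>\<close> at which the Pick matrix becomes singular is interpolable, so \<open>\<tau> \<le> d\<close>\<close>
  define \<tau> where "\<tau> = sqrt (1 - (cmod c)\<^sup>2 / (a1 * a2))"
  have \<tau>2: "\<tau>\<^sup>2 = 1 - (cmod c)\<^sup>2 / (a1 * a2)"
    unfolding \<tau>_def using rad by simp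
  have "cmod (of_real \<tau>) = \<tau>"
    using rad by (simp add: \<tau>_def)
  moreover have "a1 * ((1 - \<tau>\<^sup>2) * a2) = (cmod c)\<^sup>2"
    using a1 a2 unfolding \<tau>2 by (simp add: field_simps)
  ultimately have "\<tau> \<le> d"
    using crit[of "of_real \<tau>"] by simp
  then have "\<tau>\<^sup>2 \<le> d\<^sup>2"
    by (rule power_mono) (use rad in \<open>simp add: \<tau>_def\<close>)
  then have "(1 - d\<^sup>2) * a1 * a2 \<le> (cmod c)\<^sup>2"
    using a1 a2 unfolding \<tau>2 by (simp add: field_simps)
  with upper show ?thesis
    unfolding a1_def[symmetric] a2_def[symmetric] c_def[symmetric] d_def[symmetric] by simp
qed

lemma pick_kernel_modulus_identity:
  assumes hs: "fun_hilbert_space H ip" and rk: "is_repr_kernel H ip k"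
    and pick: "two_point_pick_property k" and l: "l \<in> ball 0 1" and m: "m \<in> ball 0 1"
  shows "(cmod (k l m))\<^sup>2 * (cmod (1 - cinner m l))\<^sup>2 =
    Re (k l l) * Re (k m m) * ((1 - (norm l)\<^sup>2) * (1 - (norm m)\<^sup>2))"
proof (cases "l = m")
  case True
  have "(norm l)\<^sup>2 < 1"
    using l by (simp add: abs_square_less_1)
  moreover have "1 - cinner l l = of_real (1 - (norm l)\<^sup>2)"
    by (simp add: cinner_self)
  ultimately have "cmod (1 - cinner l l) = 1 - (norm l)\<^sup>2"
    by (simp only: norm_of_real)
  moreover have "cmod (k l l) = Re (k l l)"
    using kernel_diag_real_nonneg[OF hs rk l] by (metis abs_of_nonneg norm_of_real)
  ultimately show ?thesis
    using True by (simp add: power2_eq_square)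
next
  case False
  have n: "norm l < 1" "norm m < 1"
    using l m by auto
  have "(cmod (k l m))\<^sup>2 = Re (k l l) * Re (k m m) * (1 - (pseudo_hyperbolic_dist l m)\<^sup>2)"
    by (rule pick_kernel_modulus[OF hs rk pick l m False])
  also have "1 - (pseudo_hyperbolic_dist l m)\<^sup>2 =
      (1 - (norm l)\<^sup>2) * (1 - (norm m)\<^sup>2) / (cmod (1 - cinner m l))\<^sup>2"
    unfolding pseudo_hyperbolic_dist_sq[OF n] by simp
  finally show ?thesis
    using one_minus_cinner_nonzero[OF n(2,1)] by (simp add: field_simps)
qed

text \<open>
  Rigidity: \<open>\<mu> \<mapsto> k\<^sub>\<lambda>(\<mu>)(1 - \<langle>\<mu>,\<lambda>\<rangle>) / (f(\<lambda>)\<^sup>* f(\<mu>))\<close> is holomorphic of modulus one and equals one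
  at \<open>\<lambda>\<close>.
\<close>

lemma kernel_eq_of_modulus_eq:
  fixes f :: "'d::{finite,linorder} hfun"
  assumes holK: "holo_on (ball 0 1) (kernel_fun k lam)" and holf: "holo_on (ball 0 1) f"
    and fnz: "\<forall>z\<in>ball 0 1. f z \<noteq> 0" and lam: "lam \<in> ball 0 1"
    and modulus: "\<And>\<mu>. \<mu> \<in> ball 0 1 \<Longrightarrow> cmod (k lam \<mu>) * cmod (1 - cinner \<mu> lam) = cmod (f lam) * cmod (f \<mu>)"
    and diag: "k lam lam * (1 - cinner lam lam) = cnj (f lam) * f lam"
    and mu: "mu \<in> ball 0 1"
  shows "k lam mu = cnj (f lam) * f mu / (1 - cinner mu lam)"
proof -
  define h where "h \<mu> = kernel_fun k lam \<mu> * (1 - cinner \<mu> lam) / (cnj (f lam) * f \<mu>)" for \<mu>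
  have "holo_on (ball 0 1) h"
    unfolding holo_on_iff_cdifferentiable h_def
  proof
    fix z :: "(complex, 'd) vec"
    assume z: "z \<in> ball 0 1"
    then have "cdifferentiable z (kernel_fun k lam)" "cdifferentiable z f" "cnj (f lam) * f z \<noteq> 0"
      using holK holf fnz lam unfolding holo_on_iff_cdifferentiable by auto
    then show "cdifferentiable z (\<lambda>\<mu>. kernel_fun k lam \<mu> * (1 - cinner \<mu> lam) / (cnj (f lam) * f \<mu>))"
      by (intro cdifferentiable_intros)
  qed
  moreover have "\<forall>\<mu>\<in>ball 0 1. cmod (h \<mu>) = 1"
    using modulus fnz lam unfolding h_def kernel_fun_def by (simp add: norm_mult norm_divide)
  ultimately obtain c where c: "\<And>z. z \<in> ball 0 1 \<Longrightarrow> h z = c"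
    using holo_on_constant_modulus_imp_constant by blast
  have "h lam = 1"
    using diag fnz lam unfolding h_def kernel_fun_def by simp
  then have "h mu = 1"
    using c lam mu by metis
  then have "k lam mu * (1 - cinner mu lam) = cnj (f lam) * f mu"
    using mu fnz lam unfolding h_def kernel_fun_def by (simp add: divide_eq_1_iff)
  moreover have "1 - cinner mu lam \<noteq> 0"
    using one_minus_cinner_nonzero mu lam by simp
  ultimately show ?thesis
    by (simp add: field_simps)
qed

lemma kernel_factorization:
  assumes hs: "fun_hilbert_space H ip" and rk: "is_repr_kernel H ip k"
    and pos: "\<And>l. l \<in> ball 0 1 \<Longrightarrow> Re (k l l) > 0"
    and modulus: "\<And>l m. l \<in> ball 0 1 \<Longrightarrow> m \<in> ball 0 1 \<Longrightarrow>
      (cmod (k l m))\<^sup>2 * (cmod (1 - cinner m l))\<^sup>2 = Re (k l l) * Re (k m m) * ((1 - (norm l)\<^sup>2) * (1 - (norm m)\<^sup>2))"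
  shows "\<exists>f. holo_on (ball 0 1) f \<and> (\<forall>z\<in>ball 0 1. f z \<noteq> 0) \<and>
    (\<forall>lam\<in>ball 0 1. \<forall>mu\<in>ball 0 1. k lam mu = cnj (f lam) * f mu / (1 - cinner mu lam))"
proof -
  have holK: "holo_on (ball 0 1) (kernel_fun k l)" if "l \<in> ball 0 1" for l
    using hs kernel_fun_in[OF rk that] unfolding fun_hilbert_space_def by blast
  have b0: "0 \<in> ball 0 1"
    by simp
  define f where "f \<mu> = kernel_fun k 0 \<mu> / of_real (sqrt (Re (k 0 0)))" for \<mu>
  have holf: "holo_on (ball 0 1) f"
    using holK[OF b0] pos[OF b0] unfolding holo_on_iff_cdifferentiable f_def
    by (auto intro: cdifferentiable_divide cdifferentiable_const)
  have fmod: "(cmod (f \<mu>))\<^sup>2 = Re (k \<mu> \<mu>) * (1 - (norm \<mu>)\<^sup>2)" if \<mu>: "\<mu> \<in> ball 0 1" for \<mu>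
    using modulus[OF b0 \<mu>] pos[OF b0] \<mu> unfolding f_def kernel_fun_def
    by (simp add: norm_divide power_divide)
  have fnz: "\<forall>\<mu>\<in>ball 0 1. f \<mu> \<noteq> 0"
  proof
    fix \<mu> :: "(complex, 'a) vec"
    assume \<mu>: "\<mu> \<in> ball 0 1"
    then have "(norm \<mu>)\<^sup>2 < 1"
      by (simp add: abs_square_less_1)
    then show "f \<mu> \<noteq> 0"
      using fmod[OF \<mu>] pos[OF \<mu>] by auto
  qed
  have "k lam mu = cnj (f lam) * f mu / (1 - cinner mu lam)"
    if lam: "lam \<in> ball 0 1" and mu: "mu \<in> ball 0 1" for lam mu
  proof (rule kernel_eq_of_modulus_eq[OF holK[OF lam] holf fnz lam _ _ mu])
    fix \<mu> :: "(complex, 'a) vec"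
    assume \<mu>: "\<mu> \<in> ball 0 1"
    have "(cmod (k lam \<mu>) * cmod (1 - cinner \<mu> lam))\<^sup>2 = (cmod (f lam) * cmod (f \<mu>))\<^sup>2"
      unfolding power_mult_distrib modulus[OF lam \<mu>] fmod[OF lam] fmod[OF \<mu>] by simp
    then show "cmod (k lam \<mu>) * cmod (1 - cinner \<mu> lam) = cmod (f lam) * cmod (f \<mu>)"
      by (simp add: power2_eq_iff_nonneg)
  next
    have "cnj (f lam) * f lam = of_real ((cmod (f lam))\<^sup>2)"
      using complex_norm_square[of "f lam"] by (simp add: mult.commute)
    also have "\<dots> = k lam lam * (1 - cinner lam lam)"
      unfolding fmod[OF lam] using kernel_diag_real_nonneg(1)[OF hs rk lam] by (simp add: cinner_self)
    finally show "k lam lam * (1 - cinner lam lam) = cnj (f lam) * f lam"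
      by simp
  qed
  with holf fnz show ?thesis
    by blast
qed

section \<open>Division by a nonvanishing holomorphic function\<close>

definition divide_on_ball :: "'d::{finite,linorder} hfun \<Rightarrow> 'd hfun \<Rightarrow> 'd hfun" where
  "divide_on_ball f h = (\<lambda>z. if z \<in> ball 0 1 then h z / f z else 0)"

definition rescaled_inner ::
    "'d::{finite,linorder} hfun \<Rightarrow> ('d hfun \<Rightarrow> 'd hfun \<Rightarrow> complex) \<Rightarrow> 'd hfun \<Rightarrow> 'd hfun \<Rightarrow> complex" where
  "rescaled_inner f ip a b = ip (\<lambda>z. a z * f z) (\<lambda>z. b z * f z)"

lemma divide_on_ball_linear:
  "divide_on_ball f (\<lambda>z. c * g z + h z) = (\<lambda>z. c * divide_on_ball f g z + divide_on_ball f h z)"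
  by (auto simp: divide_on_ball_def add_divide_distrib)

lemma divide_on_ball_times:
  assumes "\<forall>z\<in>ball 0 1. f z \<noteq> 0" "\<forall>z. z \<notin> ball 0 1 \<longrightarrow> a z = 0"
  shows "divide_on_ball f (\<lambda>z. a z * f z) = a"
  using assms by (auto simp: divide_on_ball_def)

lemma times_divide_on_ball:
  assumes "\<forall>z\<in>ball 0 1. f z \<noteq> 0" "\<forall>z. z \<notin> ball 0 1 \<longrightarrow> h z = 0"
  shows "(\<lambda>z. divide_on_ball f h z * f z) = h"
  using assms by (auto simp: divide_on_ball_def)

lemma mem_divide_on_ball_image_iff:
  assumes hs: "fun_hilbert_space H ip" and fnz: "\<forall>z\<in>ball 0 1. f z \<noteq> 0"
  shows "a \<in> divide_on_ball f ` H \<longleftrightarrow> (\<lambda>z. a z * f z) \<in> H \<and> (\<forall>z. z \<notin> ball 0 1 \<longrightarrow> a z = 0)"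
proof
  assume "a \<in> divide_on_ball f ` H"
  then obtain h where h: "h \<in> H" "a = divide_on_ball f h"
    by blast
  then have "(\<lambda>z. a z * f z) = h"
    using times_divide_on_ball[OF fnz fun_hilbert_space_vanish[OF hs h(1)]] by simp
  with h show "(\<lambda>z. a z * f z) \<in> H \<and> (\<forall>z. z \<notin> ball 0 1 \<longrightarrow> a z = 0)"
    by (simp add: divide_on_ball_def)
next
  assume "(\<lambda>z. a z * f z) \<in> H \<and> (\<forall>z. z \<notin> ball 0 1 \<longrightarrow> a z = 0)"
  then show "a \<in> divide_on_ball f ` H"
    using divide_on_ball_times[OF fnz, of a] by (metis image_eqI)
qed

lemma holo_on_divide_on_ball:
  assumes "holo_on (ball 0 1) h" "holo_on (ball 0 1) f" "\<forall>z\<in>ball 0 1. f z \<noteq> 0"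
  shows "holo_on (ball 0 1) (divide_on_ball f h)"
  unfolding holo_on_iff_cdifferentiable
proof
  fix z :: "(complex, 'a) vec"
  assume z: "z \<in> ball 0 1"
  then have "cdifferentiable z (\<lambda>x. h x / f x)"
    using assms unfolding holo_on_iff_cdifferentiable by (blast intro: cdifferentiable_divide)
  then show "cdifferentiable z (divide_on_ball f h)"
    by (rule cdifferentiable_transform_within_open[OF _ open_ball z]) (simp add: divide_on_ball_def)
qed

lemma divide_on_ball_image_complete:
  fixes s :: "nat \<Rightarrow> 'd::{finite,linorder} hfun"
  assumes hs: "fun_hilbert_space H ip" and fnz: "\<forall>z\<in>ball 0 1. f z \<noteq> 0"
    and s: "\<forall>n. s n \<in> divide_on_ball f ` H"
    and cauchy: "\<forall>e>0. \<exists>N. \<forall>m\<ge>N. \<forall>n\<ge>N. hnorm (rescaled_inner f ip) (\<lambda>z. s m z - s n z) < e"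
  shows "\<exists>g\<in>divide_on_ball f ` H. \<forall>e>0. \<exists>N. \<forall>n\<ge>N. hnorm (rescaled_inner f ip) (\<lambda>z. s n z - g z) < e"
proof -
  let ?M = "\<lambda>a z. a z * f z"
  have hnorm_M: "hnorm (rescaled_inner f ip) (\<lambda>z. a z - b z) = hnorm ip (\<lambda>z. ?M a z - ?M b z)" for a b
    unfolding hnorm_def rescaled_inner_def by (simp add: left_diff_distrib)
  have Ms: "\<forall>n. ?M (s n) \<in> H"
    using s mem_divide_on_ball_image_iff[OF hs fnz] by blast
  have complete: "\<forall>s :: nat \<Rightarrow> _. (\<forall>n. s n \<in> H) \<longrightarrow>
      (\<forall>e>0. \<exists>N. \<forall>m\<ge>N. \<forall>n\<ge>N. hnorm ip (\<lambda>z. s m z - s n z) < e) \<longrightarrow>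
      (\<exists>g\<in>H. \<forall>e>0. \<exists>N. \<forall>n\<ge>N. hnorm ip (\<lambda>z. s n z - g z) < e)"
    using hs unfolding fun_hilbert_space_def by blast
  obtain g where g: "g \<in> H" "\<forall>e>0. \<exists>N. \<forall>n\<ge>N. hnorm ip (\<lambda>z. ?M (s n) z - g z) < e"
    using spec[OF complete, of "\<lambda>n. ?M (s n)"] Ms cauchy[unfolded hnorm_M] by blast
  have "divide_on_ball f g z * f z = g z" for z
    using fun_cong[OF times_divide_on_ball[OF fnz fun_hilbert_space_vanish[OF hs g(1)]]] by simp
  then have "\<forall>e>0. \<exists>N. \<forall>n\<ge>N. hnorm (rescaled_inner f ip) (\<lambda>z. s n z - divide_on_ball f g z) < e"
    using g(2) by (simp add: hnorm_M)
  moreover have "divide_on_ball f g \<in> divide_on_ball f ` H"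
    using g(1) by blast
  ultimately show ?thesis
    by blast
qed

lemma fun_hilbert_space_divide_on_ball:
  assumes hs: "fun_hilbert_space H ip" and holf: "holo_on (ball 0 1) f"
    and fnz: "\<forall>z\<in>ball 0 1. f z \<noteq> 0"
  shows "fun_hilbert_space (divide_on_ball f ` H) (rescaled_inner f ip)"
proof -
  from hs have hol: "\<forall>h\<in>H. holo_on (ball 0 1) h \<and> (\<forall>z. z \<notin> ball 0 1 \<longrightarrow> h z = 0)"
    and zero: "(\<lambda>z. 0) \<in> H"
    and add: "\<forall>g\<in>H. \<forall>h\<in>H. (\<lambda>z. g z + h z) \<in> H"
    and scale: "\<forall>c. \<forall>h\<in>H. (\<lambda>z. c * h z) \<in> H"
    and ip_add: "\<forall>g\<in>H. \<forall>h\<in>H. \<forall>l\<in>H. ip (\<lambda>z. g z + h z) l = ip g l + ip h l"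
    and ip_scale: "\<forall>c. \<forall>g\<in>H. \<forall>h\<in>H. ip (\<lambda>z. c * g z) h = c * ip g h"
    and ip_cnj: "\<forall>g\<in>H. \<forall>h\<in>H. ip h g = cnj (ip g h)"
    and ip_pos: "\<forall>h\<in>H. Im (ip h h) = 0 \<and> Re (ip h h) \<ge> 0"
    and ip_def: "\<forall>h\<in>H. ip h h = 0 \<longrightarrow> h = (\<lambda>z. 0)"
    unfolding fun_hilbert_space_def by blast+
  let ?D = "divide_on_ball f" and ?M = "\<lambda>a z. a z * f z"
  have M_in: "?M a \<in> H" and vanish: "\<forall>z. z \<notin> ball 0 1 \<longrightarrow> a z = 0" and DM: "?D (?M a) = a"
    if "a \<in> ?D ` H" for a
    using that mem_divide_on_ball_image_iff[OF hs fnz] divide_on_ball_times[OF fnz] by blast+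
  have D_closed: "a \<in> ?D ` H" if "?M a \<in> H" "\<forall>z. z \<notin> ball 0 1 \<longrightarrow> a z = 0" for a
    using that mem_divide_on_ball_image_iff[OF hs fnz] by blast
  have M_add: "?M (\<lambda>z. a z + b z) = (\<lambda>z. ?M a z + ?M b z)"
    and M_scale: "?M (\<lambda>z. c * a z) = (\<lambda>z. c * ?M a z)" for a b c
    by (simp_all add: distrib_right mult.assoc)
  show ?thesis
    unfolding fun_hilbert_space_def
  proof (intro conjI ballI allI impI)
    fix a
    assume a: "a \<in> ?D ` H"
    have "holo_on (ball 0 1) (?D (?M a))"
      using hol M_in[OF a] holf fnz by (blast intro: holo_on_divide_on_ball)
    then show "holo_on (ball 0 1) a"
      using DM[OF a] by simp
  next
    fix a and z :: "(complex, 'a) vec"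
    assume "a \<in> ?D ` H" "z \<notin> ball 0 1"
    then show "a z = 0"
      using vanish by blast
  next
    show "(\<lambda>z. 0) \<in> ?D ` H"
      by (rule D_closed) (simp_all add: zero)
  next
    fix a b
    assume a: "a \<in> ?D ` H" and b: "b \<in> ?D ` H"
    have "?M (\<lambda>z. a z + b z) \<in> H"
      unfolding M_add by (rule add[rule_format, OF M_in[OF a] M_in[OF b]])
    then show "(\<lambda>z. a z + b z) \<in> ?D ` H"
      by (rule D_closed) (use vanish[OF a] vanish[OF b] in simp)
  next
    fix c a
    assume a: "a \<in> ?D ` H"
    have "?M (\<lambda>z. c * a z) \<in> H"
      unfolding M_scale by (rule scale[rule_format, OF M_in[OF a]])
    then show "(\<lambda>z. c * a z) \<in> ?D ` H"
      by (rule D_closed) (use vanish[OF a] in simp)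
  next
    fix a b l
    assume a: "a \<in> ?D ` H" and b: "b \<in> ?D ` H" and l: "l \<in> ?D ` H"
    show "rescaled_inner f ip (\<lambda>z. a z + b z) l = rescaled_inner f ip a l + rescaled_inner f ip b l"
      unfolding rescaled_inner_def M_add by (rule ip_add[rule_format, OF M_in[OF a] M_in[OF b] M_in[OF l]])
  next
    fix c a b
    assume a: "a \<in> ?D ` H" and b: "b \<in> ?D ` H"
    show "rescaled_inner f ip (\<lambda>z. c * a z) b = c * rescaled_inner f ip a b"
      unfolding rescaled_inner_def M_scale by (rule ip_scale[rule_format, OF M_in[OF a] M_in[OF b]])
  next
    fix a b
    assume a: "a \<in> ?D ` H" and b: "b \<in> ?D ` H"
    show "rescaled_inner f ip b a = cnj (rescaled_inner f ip a b)"
      unfolding rescaled_inner_def by (rule ip_cnj[rule_format, OF M_in[OF a] M_in[OF b]])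
  next
    fix a
    assume a: "a \<in> ?D ` H"
    show "Im (rescaled_inner f ip a a) = 0"
      unfolding rescaled_inner_def using ip_pos M_in[OF a] by blast
  next
    fix a
    assume a: "a \<in> ?D ` H"
    show "Re (rescaled_inner f ip a a) \<ge> 0"
      unfolding rescaled_inner_def using ip_pos M_in[OF a] by blast
  next
    fix a
    assume a: "a \<in> ?D ` H" and "rescaled_inner f ip a a = 0"
    then have "?M a = (\<lambda>z. 0)"
      unfolding rescaled_inner_def by (intro ip_def[rule_format, OF M_in[OF a]])
    then have "a = ?D (\<lambda>z. 0)"
      using DM[OF a] by simp
    also have "?D (\<lambda>z. 0) = (\<lambda>z. 0)"
      unfolding divide_on_ball_def by (rule ext) simp
    finally show "a = (\<lambda>z. 0)" .
  next
    fix s :: "nat \<Rightarrow> 'a hfun"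
    assume "\<forall>n. s n \<in> ?D ` H"
      and "\<forall>e>0. \<exists>N. \<forall>m\<ge>N. \<forall>n\<ge>N. hnorm (rescaled_inner f ip) (\<lambda>z. s m z - s n z) < e"
    then show "\<exists>g\<in>?D ` H. \<forall>e>0. \<exists>N. \<forall>n\<ge>N. hnorm (rescaled_inner f ip) (\<lambda>z. s n z - g z) < e"
      by (rule divide_on_ball_image_complete[OF hs fnz])
  qed
qed

lemma is_repr_kernel_divide_on_ball:
  assumes hs: "fun_hilbert_space H ip" and rk: "is_repr_kernel H ip k"
    and fnz: "\<forall>z\<in>ball 0 1. f z \<noteq> 0"
    and kf: "\<forall>lam\<in>ball 0 1. \<forall>mu\<in>ball 0 1. k lam mu = cnj (f lam) * f mu * K lam mu"
  shows "is_repr_kernel (divide_on_ball f ` H) (rescaled_inner f ip) K"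
  unfolding is_repr_kernel_def
proof (intro ballI conjI)
  fix lam :: "(complex, 'a) vec"
  assume lam: "lam \<in> ball 0 1"
  define c where "c = 1 / cnj (f lam)"
  have flam: "f lam \<noteq> 0"
    using fnz lam by blast
  have cK: "(\<lambda>z. c * kernel_fun k lam z) \<in> H"
    using fun_hilbert_space_scale[OF hs kernel_fun_in[OF rk lam]] .
  have K: "(\<lambda>mu. if mu \<in> ball 0 1 then K lam mu else 0) = divide_on_ball f (\<lambda>z. c * kernel_fun k lam z)"
  proof
    fix mu :: "(complex, 'a) vec"
    show "(if mu \<in> ball 0 1 then K lam mu else 0) = divide_on_ball f (\<lambda>z. c * kernel_fun k lam z) mu"
    proof (cases "mu \<in> ball 0 1")
      case True
      then have "k lam mu = cnj (f lam) * f mu * K lam mu" "f mu \<noteq> 0"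
        using kf lam fnz by auto
      with True flam show ?thesis
        by (simp add: divide_on_ball_def kernel_fun_def c_def)
    qed (simp add: divide_on_ball_def)
  qed
  then show "(\<lambda>mu. if mu \<in> ball 0 1 then K lam mu else 0) \<in> divide_on_ball f ` H"
    using cK by simp
  fix a
  assume "a \<in> divide_on_ball f ` H"
  then obtain h where h: "h \<in> H" "a = divide_on_ball f h"
    by blast
  have "rescaled_inner f ip a (\<lambda>mu. if mu \<in> ball 0 1 then K lam mu else 0) =
      ip h (\<lambda>z. c * kernel_fun k lam z)"
    unfolding K rescaled_inner_def h(2)
    using times_divide_on_ball[OF fnz fun_hilbert_space_vanish[OF hs]] h(1) cK by simp
  also have "\<dots> = cnj c * ip h (kernel_fun k lam)"
    by (rule fun_hilbert_space_inner_scale_right[OF hs h(1) kernel_fun_in[OF rk lam]])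
  also have "\<dots> = a lam"
    using kernel_fun_reproduces[OF rk lam h(1)] lam flam unfolding h(2) c_def divide_on_ball_def by simp
  finally show "rescaled_inner f ip a (\<lambda>mu. if mu \<in> ball 0 1 then K lam mu else 0) = a lam" .
qed

lemma unitarily_equiv_mult_divide_on_ball:
  assumes hs: "fun_hilbert_space H ip" and fnz: "\<forall>z\<in>ball 0 1. f z \<noteq> 0"
  shows "unitarily_equiv_mult H ip (divide_on_ball f ` H) (rescaled_inner f ip)"
  unfolding unitarily_equiv_mult_def
proof (intro exI conjI)
  have undo: "(\<lambda>z. divide_on_ball f h z * f z) = h" if "h \<in> H" for h
    using times_divide_on_ball[OF fnz fun_hilbert_space_vanish[OF hs that]] .
  have "inj_on (divide_on_ball f) H"
  proof (rule inj_onI)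
    fix g h
    assume "g \<in> H" "h \<in> H" and eq: "divide_on_ball f g = divide_on_ball f h"
    have "g = (\<lambda>z. divide_on_ball f g z * f z)"
      using undo[OF \<open>g \<in> H\<close>] by simp
    also have "\<dots> = h"
      unfolding eq by (rule undo[OF \<open>h \<in> H\<close>])
    finally show "g = h" .
  qed
  then show "bij_betw (divide_on_ball f) H (divide_on_ball f ` H)"
    by (simp add: bij_betw_def)
  show "\<forall>g\<in>H. \<forall>h\<in>H. rescaled_inner f ip (divide_on_ball f g) (divide_on_ball f h) = ip g h"
    unfolding rescaled_inner_def using undo by presburger
  show "\<forall>c. \<forall>g\<in>H. \<forall>h\<in>H. divide_on_ball f (\<lambda>z. c * g z + h z) =
      (\<lambda>z. c * divide_on_ball f g z + divide_on_ball f h z)"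
    by (simp add: divide_on_ball_linear)
  have "divide_on_ball f (mult_op r h) = mult_op r (divide_on_ball f h)" for r h
    by (rule ext) (simp add: divide_on_ball_def mult_op_def)
  then show "\<forall>r. \<forall>h\<in>H. divide_on_ball f (mult_op r h) = mult_op r (divide_on_ball f h)"
    by blast
qed

lemma block_psd_diagonal_congruence:
  assumes A: "\<And>i j p q. i < n \<Longrightarrow> j < n \<Longrightarrow> A i j p q = cnj (g i) * g j * B i j p q"
    and g: "\<And>i. i < n \<Longrightarrow> g i \<noteq> 0"
  shows "block_psd n m A \<longleftrightarrow> block_psd n m B"
proof -
  have form: "(\<Sum>i<n. \<Sum>j<n. \<Sum>p<m. \<Sum>q<m. A i j p q * a i q * cnj (a j p)) =
      (\<Sum>i<n. \<Sum>j<n. \<Sum>p<m. \<Sum>q<m. B i j p q * (cnj (g i) * a i q) * cnj (cnj (g j) * a j p))" for a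
    by (intro sum.cong refl) (simp add: A mult_ac)
  have rescale: "(\<Sum>i<n. \<Sum>j<n. \<Sum>p<m. \<Sum>q<m. B i j p q * b i q * cnj (b j p)) =
      (\<Sum>i<n. \<Sum>j<n. \<Sum>p<m. \<Sum>q<m. B i j p q * (cnj (g i) * (b i q / cnj (g i)))
        * cnj (cnj (g j) * (b j p / cnj (g j))))" for b
    by (intro sum.cong refl) (simp add: g)
  show ?thesis
  proof
    assume "block_psd n m A"
    note psd = this[unfolded block_psd_def, rule_format]
    show "block_psd n m B"
      unfolding block_psd_def
    proof
      fix b :: "nat \<Rightarrow> nat \<Rightarrow> complex"
      show "let s = \<Sum>i<n. \<Sum>j<n. \<Sum>p<m. \<Sum>q<m. B i j p q * b i q * cnj (b j p) in Im s = 0 \<and> 0 \<le> Re s"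
        by (subst rescale) (rule psd[of "\<lambda>i q. b i q / cnj (g i)", unfolded form])
    qed
  next
    assume "block_psd n m B"
    note psd = this[unfolded block_psd_def, rule_format]
    show "block_psd n m A"
      unfolding block_psd_def form
    proof
      fix a :: "nat \<Rightarrow> nat \<Rightarrow> complex"
      show "let s = \<Sum>i<n. \<Sum>j<n. \<Sum>p<m. \<Sum>q<m.
          B i j p q * (cnj (g i) * a i q) * cnj (cnj (g j) * a j p) in Im s = 0 \<and> 0 \<le> Re s"
        by (rule psd[of "\<lambda>i q. cnj (g i) * a i q"])
    qed
  qed
qed

theorem proposition4p6:
  fixes H :: "((complex, 'd::{finite,linorder}) vec \<Rightarrow> complex) set"
    and ip :: "((complex, 'd) vec \<Rightarrow> complex) \<Rightarrow> ((complex, 'd) vec \<Rightarrow> complex) \<Rightarrow> complex"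
    and k :: "(complex, 'd) vec \<Rightarrow> (complex, 'd) vec \<Rightarrow> complex"
  assumes reg: "regular_space H ip k"
    and pick: "\<forall>l1\<in>ball 0 1. \<forall>l2\<in>ball 0 1. l1 \<noteq> l2 \<longrightarrow> (\<forall>z1 z2 :: complex.
       (\<exists>\<phi>. holo_on (ball 0 1) \<phi> \<and> (\<forall>z\<in>ball 0 1. cmod (\<phi> z) \<le> 1) \<and> \<phi> l1 = z1 \<and> \<phi> l2 = z2)
       \<longleftrightarrow> block_psd 2 1 (\<lambda>i j p q.
              (1 - (if j = 0 then z1 else z2) * cnj (if i = 0 then z1 else z2)) *
              k (if i = 0 then l1 else l2) (if j = 0 then l1 else l2)))"
  shows "(\<exists>f. holo_on (ball 0 1) f \<and> (\<forall>z\<in>ball 0 1. f z \<noteq> 0) \<and>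
            (\<forall>lam\<in>ball 0 1. \<forall>mu\<in>ball 0 1. k lam mu = cnj (f lam) * f mu / (1 - cinner mu lam)))
       \<and> (\<exists>H' ip'. fun_hilbert_space H' ip' \<and>
            is_repr_kernel H' ip' (\<lambda>lam mu. 1 / (1 - cinner mu lam)) \<and>
            unitarily_equiv_mult H ip H' ip')
       \<and> (\<forall>(m::nat) (n::nat) (lam :: nat \<Rightarrow> (complex, 'd) vec) (Z :: nat \<Rightarrow> nat \<Rightarrow> nat \<Rightarrow> complex).
            (\<forall>i<n. lam i \<in> ball 0 1) \<longrightarrow>
            (block_psd n m (\<lambda>i j p q. ((if p = q then 1 else 0) - (\<Sum>r<m. Z j p r * cnj (Z i q r)))
                                      * k (lam i) (lam j))
             \<longleftrightarrow> block_psd n m (\<lambda>i j p q. ((if p = q then 1 else 0) - (\<Sum>r<m. Z j p r * cnj (Z i q r)))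
                                      / (1 - cinner (lam j) (lam i)))))"
proof -
  \<comment> \<open>of regularity only the reproducing kernel structure is needed\<close>
  have hs: "fun_hilbert_space H ip" and rk: "is_repr_kernel H ip k"
    using reg unfolding regular_space_def by blast+
  have pick': "two_point_pick_property k"
    using pick unfolding two_point_pick_property_def schur_function_def by (simp add: conj_assoc)
  obtain f where holf: "holo_on (ball 0 1) f" and fnz: "\<forall>z\<in>ball 0 1. f z \<noteq> 0"
    and kf: "\<forall>lam\<in>ball 0 1. \<forall>mu\<in>ball 0 1. k lam mu = cnj (f lam) * f mu / (1 - cinner mu lam)"
    using kernel_factorization[OF hs rk pick_kernel_diag_pos[OF hs rk pick']
        pick_kernel_modulus_identity[OF hs rk pick']] by blast
  have "is_repr_kernel (divide_on_ball f ` H) (rescaled_inner f ip) (\<lambda>lam mu. 1 / (1 - cinner mu lam))"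
    using kf by (intro is_repr_kernel_divide_on_ball[OF hs rk fnz]) simp
  then have "\<exists>H' ip'. fun_hilbert_space H' ip' \<and>
      is_repr_kernel H' ip' (\<lambda>lam mu. 1 / (1 - cinner mu lam)) \<and> unitarily_equiv_mult H ip H' ip'"
    using fun_hilbert_space_divide_on_ball[OF hs holf fnz] unitarily_equiv_mult_divide_on_ball[OF hs fnz]
    by blast
  moreover have "block_psd n m (\<lambda>i j p q. ((if p = q then 1 else 0) - (\<Sum>r<m. Z j p r * cnj (Z i q r))) * k (lam i) (lam j))
      \<longleftrightarrow> block_psd n m (\<lambda>i j p q. ((if p = q then 1 else 0) - (\<Sum>r<m. Z j p r * cnj (Z i q r)))
                                      / (1 - cinner (lam j) (lam i)))"
    if "\<forall>i<n. lam i \<in> ball 0 1" for m n lam Z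
    using kf fnz that by (intro block_psd_diagonal_congruence[where g = "\<lambda>i. f (lam i)"]) auto
  ultimately show ?thesis
    using holf fnz kf by blast
qed

end
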